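(* Let $D_1,D_2\subset\mathbb{C}$ be domains, and for $j=1,2$ let $p_j\colon E\to D_j$ be a holomorphic universal covering of $D_j$ which is not injective (i.e. $D_j$ has the unit disc as universal cover and is not simply connected). Then $h_{D_1\times D_2}\not\equiv\kappa_{D_1\times D_2}$, i.e. there exist $z\in D_1\times D_2$ and $X\in\mathbb{C}^2$ with $h_{D_1\times D_2}(z;X)\neq\kappa_{D_1\times D_2}(z;X)$.
   Context: $E$ denotes the open unit disc in $\mathbb{C}$, and $\mathcal{O}(E,D)$ the set of holomorphic maps $E\to D$. For a domain $D\subset\mathbb{C}^n$, $z\in D$, $X\in\mathbb{C}^n$, the Kobayashi–Royden pseudometric is $\kappa_D(z;X):=\inf\{|\alpha| : \exists f\in\mathcal{O}(E,D),\ f(0)=z,\ \alpha f'(0)=X\}$ and the Hahn pseudometric is $h_D(z;X):=\inf\{|\alpha| : \exists f\in\mathcal{O}(E,D) \text{ injective},\ f(0)=z,\ \alpha f'(0)=X\}$. *)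

theory Defs
  imports "HOL-Complex_Analysis.Complex_Analysis"
begin

definition unit_disc :: "complex set" where
  "unit_disc = ball 0 1"

text \<open>C^2 is modelled as complex \<times> complex. A map f from E to C^2 is holomorphic iff
  both coordinate functions are holomorphic on E; it lies in O(E,D) if moreover f(E) \<subseteq> D.\<close>
definition hol_disc_map :: "(complex \<times> complex) set \<Rightarrow> (complex \<Rightarrow> complex \<times> complex) \<Rightarrow> bool" where
  "hol_disc_map D f \<longleftrightarrow>
     (\<lambda>\<zeta>. fst (f \<zeta>)) holomorphic_on unit_disc \<and>
     (\<lambda>\<zeta>. snd (f \<zeta>)) holomorphic_on unit_disc \<and>
     f ` unit_disc \<subseteq> D"

definition deriv0 :: "(complex \<Rightarrow> complex \<times> complex) \<Rightarrow> complex \<times> complex" where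
  "deriv0 f = (deriv (\<lambda>\<zeta>. fst (f \<zeta>)) 0, deriv (\<lambda>\<zeta>. snd (f \<zeta>)) 0)"

definition cscale :: "complex \<Rightarrow> complex \<times> complex \<Rightarrow> complex \<times> complex" where
  "cscale a v = (a * fst v, a * snd v)"

definition kobayashi :: "(complex \<times> complex) set \<Rightarrow> complex \<times> complex \<Rightarrow> complex \<times> complex \<Rightarrow> real" where
  "kobayashi D z X = Inf {cmod \<alpha> | \<alpha>. \<exists>f. hol_disc_map D f \<and> f 0 = z \<and> cscale \<alpha> (deriv0 f) = X}"

definition hahn :: "(complex \<times> complex) set \<Rightarrow> complex \<times> complex \<Rightarrow> complex \<times> complex \<Rightarrow> real" where
  "hahn D z X = Inf {cmod \<alpha> | \<alpha>. \<exists>f. hol_disc_map D f \<and> inj_on f unit_disc \<and> f 0 = z \<and> cscale \<alpha> (deriv0 f) = X}"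

end

theory Submission
  imports Defs
begin

text \<open>Everything is lifted to the unit disc. A non-injective covering has a fixed-point-free deck
  transformation, which is a Moebius automorphism of the disc. After replacing the deck transformations
  \<open>X\<close> of \<open>p1\<close> and \<open>Y\<close> of \<open>p2\<close> by suitable squares or inverses, they are not conjugate, so a disc
  automorphism \<open>M\<close> carrying a pair \<open>(a, X a)\<close> to a pair \<open>(s, Y s)\<close> cannot intertwine \<open>X\<close> and \<open>Y\<close> to
  first order. This makes the holomorphic disc \<open>(p1 \<circ> T, p2 \<circ> M \<circ> T)\<close>, with \<open>T 0 = a\<close>, have a
  transversal double point. By Brouwer's fixed point theorem such a double point survives
  precomposition of the two components with self-maps of the disc that fix 0 and have a common,
  almost unimodular derivative there. Every injective disc through the same point and in the same
  direction factors through the coverings in exactly this way, so its scaling factor is at least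
  \<open>1 / (1 - \<theta>) > 1\<close>; hence the Hahn metric exceeds the Kobayashi metric, which the disc
  \<open>(p1 \<circ> T, p2 \<circ> M \<circ> T)\<close> itself bounds by 1.\<close>

section \<open>Disc automorphisms as matrices\<close>

text \<open>A pair \<open>(A, B)\<close> stands for the matrix \<open>[[A, B], [cnj B, cnj A]]\<close>. When \<open>|B| < |A|\<close> it acts
  on the unit disc by \<open>z \<mapsto> (A z + B) / (cnj B z + cnj A)\<close>; every automorphism of the disc
  arises this way, and composition corresponds to the matrix product.\<close>

definition moeb :: "complex \<times> complex \<Rightarrow> complex \<Rightarrow> complex" where
  "moeb P z = (fst P * z + snd P) / (cnj (snd P) * z + cnj (fst P))"

definition moeb_denom :: "complex \<times> complex \<Rightarrow> complex \<Rightarrow> complex" where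
  "moeb_denom P z = cnj (snd P) * z + cnj (fst P)"

definition mat_det :: "complex \<times> complex \<Rightarrow> real" where
  "mat_det P = (cmod (fst P))^2 - (cmod (snd P))^2"

definition mat_mult :: "complex \<times> complex \<Rightarrow> complex \<times> complex \<Rightarrow> complex \<times> complex" where
  "mat_mult P Q = (fst P * fst Q + snd P * cnj (snd Q), fst P * snd Q + snd P * cnj (fst Q))"

definition mat_adj :: "complex \<times> complex \<Rightarrow> complex \<times> complex" where
  "mat_adj P = (cnj (fst P), - snd P)"

definition mat_scale :: "real \<Rightarrow> complex \<times> complex \<Rightarrow> complex \<times> complex" where
  "mat_scale k P = (of_real k * fst P, of_real k * snd P)"

definition mat_transl :: "complex \<Rightarrow> complex \<times> complex" where
  "mat_transl a = (1, a)"

definition moeb_deriv :: "complex \<times> complex \<Rightarrow> complex \<Rightarrow> complex" where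
  "moeb_deriv P z = of_real (mat_det P) / (moeb_denom P z)^2"

lemma of_real_mat_det: "complex_of_real (mat_det P) = fst P * cnj (fst P) - snd P * cnj (snd P)"
  unfolding mat_det_def of_real_diff complex_norm_square by simp

lemma mat_det_pos_iff: "mat_det P > 0 \<longleftrightarrow> cmod (snd P) < cmod (fst P)"
  unfolding mat_det_def by (auto intro: power_strict_mono dest: power2_less_imp_less)

lemma moeb_denom_nonzero:
  assumes "mat_det P > 0" "cmod z < 1"
  shows "moeb_denom P z \<noteq> 0"
proof
  assume "moeb_denom P z = 0"
  then have "cnj (fst P) = - cnj (snd P) * z"
    by (simp add: moeb_denom_def add_eq_0_iff)
  then have "cmod (fst P) = cmod (snd P) * cmod z"
    by (metis complex_mod_cnj norm_minus_cancel norm_mult)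
  also have "\<dots> \<le> cmod (snd P)"
    using assms(2) by (simp add: mult_left_le)
  finally show False
    using assms(1) by (simp add: mat_det_pos_iff)
qed

lemma moeb_norm_identity:
  assumes "mat_det P > 0" "cmod z < 1"
  shows "1 - (cmod (moeb P z))^2 = mat_det P * (1 - (cmod z)^2) / (cmod (moeb_denom P z))^2"
proof -
  obtain A B where P: "P = (A, B)" by fastforce
  have "complex_of_real ((cmod (moeb_denom P z))^2 - (cmod (A*z+B))^2)
      = complex_of_real (mat_det P * (1 - (cmod z)^2))"
    unfolding complex_norm_square of_real_diff of_real_mult of_real_mat_det
    by (simp add: P moeb_denom_def algebra_simps)
  then have "(cmod (moeb_denom P z))^2 - (cmod (A*z+B))^2 = mat_det P * (1 - (cmod z)^2)"
    using of_real_eq_iff by blast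
  moreover have "(cmod (moeb P z))^2 = (cmod (A*z+B))^2 / (cmod (moeb_denom P z))^2"
    by (simp add: moeb_def moeb_denom_def P norm_divide power_divide)
  ultimately show ?thesis
    using moeb_denom_nonzero[OF assms] by (simp add: field_simps)
qed

lemma moeb_in_disc:
  assumes "mat_det P > 0" "cmod z < 1"
  shows "cmod (moeb P z) < 1"
proof -
  have "mat_det P * (1 - (cmod z)^2) / (cmod (moeb_denom P z))^2 > 0"
    using assms moeb_denom_nonzero by (simp add: abs_square_less_1)
  then have "(cmod (moeb P z))^2 < 1"
    using moeb_norm_identity[OF assms] by simp
  then show ?thesis
    using abs_square_less_1[of "cmod (moeb P z)"] by simp
qed

lemma mat_det_mult: "mat_det (mat_mult P Q) = mat_det P * mat_det Q"
proof -
  have "complex_of_real (mat_det (mat_mult P Q)) = complex_of_real (mat_det P * mat_det Q)"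
    unfolding of_real_mult of_real_mat_det by (simp add: mat_mult_def algebra_simps)
  then show ?thesis
    using of_real_eq_iff by blast
qed

lemma mat_det_adj [simp]: "mat_det (mat_adj P) = mat_det P"
  by (simp add: mat_det_def mat_adj_def)

lemma mat_det_scale: "mat_det (mat_scale k P) = k^2 * mat_det P"
  by (simp add: mat_det_def mat_scale_def norm_mult power_mult_distrib algebra_simps)

lemma mat_det_transl: "mat_det (mat_transl a) = 1 - (cmod a)^2"
  by (simp add: mat_det_def mat_transl_def)

lemma mat_det_transl_pos: "cmod a < 1 \<Longrightarrow> mat_det (mat_transl a) > 0"
  by (simp add: mat_det_transl abs_square_less_1)

lemma mat_mult_adj_left: "mat_mult (mat_adj P) P = (of_real (mat_det P), 0)"
  by (simp add: mat_mult_def mat_adj_def of_real_mat_det algebra_simps)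

lemma mat_mult_adj_right: "mat_mult P (mat_adj P) = (of_real (mat_det P), 0)"
  by (simp add: mat_mult_def mat_adj_def of_real_mat_det algebra_simps)

lemma moeb_scalar: "k \<noteq> 0 \<Longrightarrow> moeb (of_real k, 0) z = z"
  by (simp add: moeb_def)

lemma moeb_transl_0: "moeb (mat_transl a) 0 = a"
  by (simp add: moeb_def mat_transl_def)

lemma moeb_adj_transl: "moeb (mat_adj (mat_transl a)) a = 0"
  by (simp add: moeb_def mat_transl_def mat_adj_def)

lemma moeb_adj_transl_eq: "moeb (mat_adj (mat_transl a)) z = (z - a) / (1 - cnj a * z)"
  by (simp add: moeb_def mat_adj_def mat_transl_def algebra_simps)

lemma moeb_denom_mult:
  assumes "mat_det P > 0" "mat_det Q > 0" "cmod z < 1"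
  shows "moeb_denom (mat_mult P Q) z = moeb_denom P (moeb Q z) * moeb_denom Q z"
  using moeb_denom_nonzero[OF assms(2,3)]
  by (simp add: moeb_denom_def moeb_def mat_mult_def field_simps)

lemma moeb_mult:
  assumes "mat_det P > 0" "mat_det Q > 0" "cmod z < 1"
  shows "moeb (mat_mult P Q) z = moeb P (moeb Q z)"
proof -
  have den: "moeb_denom Q z \<noteq> 0"
    using moeb_denom_nonzero[OF assms(2,3)] .
  have "moeb P (moeb Q z) = (fst P * (fst Q * z + snd Q) + snd P * moeb_denom Q z)
      / (cnj (snd P) * (fst Q * z + snd Q) + cnj (fst P) * moeb_denom Q z)"
    using den by (simp add: moeb_def moeb_denom_def divide_simps)
  also have "\<dots> = moeb (mat_mult P Q) z"
    by (simp add: moeb_def moeb_denom_def mat_mult_def algebra_simps)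
  finally show ?thesis ..
qed

lemma moeb_adj_moeb:
  assumes "mat_det P > 0" "cmod z < 1"
  shows "moeb (mat_adj P) (moeb P z) = z"
  using moeb_mult[of "mat_adj P" P z] assms by (simp add: mat_mult_adj_left moeb_scalar)

lemma moeb_moeb_adj:
  assumes "mat_det P > 0" "cmod z < 1"
  shows "moeb P (moeb (mat_adj P) z) = z"
  using moeb_mult[of P "mat_adj P" z] assms by (simp add: mat_mult_adj_right moeb_scalar)

lemma has_field_derivative_moeb:
  assumes "moeb_denom P z \<noteq> 0"
  shows "(moeb P has_field_derivative moeb_deriv P z) (at z)"
proof -
  have "(moeb P has_field_derivative
      ((fst P * moeb_denom P z - (fst P * z + snd P) * cnj (snd P)) / (moeb_denom P z)^2)) (at z)"
    using assms unfolding moeb_def moeb_denom_def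
    by (auto intro!: derivative_eq_intros simp: power2_eq_square)
  moreover have "(fst P * moeb_denom P z - (fst P * z + snd P) * cnj (snd P)) / (moeb_denom P z)^2
      = moeb_deriv P z"
    by (simp add: moeb_deriv_def of_real_mat_det moeb_denom_def algebra_simps)
  ultimately show ?thesis
    by simp
qed

lemma holomorphic_on_moeb: "mat_det P > 0 \<Longrightarrow> moeb P holomorphic_on ball 0 1"
  using has_field_derivative_moeb moeb_denom_nonzero
  by (metis field_differentiable_def holomorphic_on_open mem_ball_0 open_ball)

lemma moeb_deriv_nonzero: "mat_det P > 0 \<Longrightarrow> cmod z < 1 \<Longrightarrow> moeb_deriv P z \<noteq> 0"
  using moeb_denom_nonzero by (simp add: moeb_deriv_def)

lemma moeb_deriv_mult:
  assumes "mat_det P > 0" "mat_det Q > 0" "cmod z < 1"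
  shows "moeb_deriv (mat_mult P Q) z = moeb_deriv P (moeb Q z) * moeb_deriv Q z"
  using assms by (simp add: moeb_deriv_def moeb_denom_mult mat_det_mult power_mult_distrib)

lemma moeb_deriv_scalar: "k \<noteq> 0 \<Longrightarrow> moeb_deriv (of_real k, 0) z = 1"
  by (simp add: moeb_deriv_def mat_det_def moeb_denom_def power2_eq_square norm_mult)

lemma moeb_deriv_adj_mult:
  assumes "mat_det P > 0" "cmod z < 1"
  shows "moeb_deriv (mat_adj P) (moeb P z) * moeb_deriv P z = 1"
  using moeb_deriv_mult[of "mat_adj P" P z] assms by (simp add: mat_mult_adj_left moeb_deriv_scalar)

lemma quadratic_vanishing_on_disc:
  fixes c0 c1 c2 :: complex
  assumes "\<And>z. cmod z < 1 \<Longrightarrow> c2 * z^2 + c1 * z + c0 = 0"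
  shows "c0 = 0" "c1 = 0" "c2 = 0"
proof -
  show c0: "c0 = 0"
    using assms[of 0] by simp
  have "c2 / 4 + c1 / 2 = 0" "c2 / 4 - c1 / 2 = 0"
    using assms[of "1/2"] assms[of "-1/2"] c0 by (simp_all add: power2_eq_square)
  then show "c1 = 0" "c2 = 0"
    by (simp_all add: field_simps)
qed

lemma moeb_eq_imp_mat_scale:
  assumes eq: "\<And>z. cmod z < 1 \<Longrightarrow> moeb P z = moeb P' z"
    and d: "mat_det P > 0" "mat_det P' > 0"
  obtains k where "k \<noteq> 0" "P' = mat_scale k P"
proof -
  obtain A B where P: "P = (A, B)" by fastforce
  obtain A' B' where P': "P' = (A', B')" by fastforce
  have "(A * cnj B' - A' * cnj B) * z^2 + (A * cnj A' + B * cnj B' - A' * cnj A - B' * cnj B) * z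
      + (B * cnj A' - B' * cnj A) = 0" if "cmod z < 1" for z
  proof -
    have "(A*z + B) / (cnj B*z + cnj A) = (A'*z + B') / (cnj B'*z + cnj A')"
      using eq[OF that] by (simp add: moeb_def P P')
    then show ?thesis
      using moeb_denom_nonzero[OF d(1) that] moeb_denom_nonzero[OF d(2) that]
      by (simp add: moeb_denom_def P P' field_simps power2_eq_square)
  qed
  note coeffs = quadratic_vanishing_on_disc[OF this]
  have A0: "A \<noteq> 0"
    using d(1) by (auto simp: mat_det_pos_iff P)
  define k where "k = A' / A"
  have kA: "A' = k * A"
    using A0 by (simp add: k_def)
  have kB: "B' = cnj k * B"
    using coeffs(1) A0 by (simp add: kA) (metis mult.commute mult_cancel_right)
  have "(cnj k - k) * complex_of_real (mat_det P) = 0"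
    using coeffs(2) by (simp add: of_real_mat_det P kA kB algebra_simps)
  then have "cnj k = k"
    using d(1) by simp
  then have kr: "k = of_real (Re k)"
    by (simp add: complex_eq_iff)
  have "k \<noteq> 0"
    using d(2) by (auto simp: P' kA kB mat_det_def)
  then show ?thesis
    using that[of "Re k"] kr kA kB
    by (metis P P' complex_cnj_complex_of_real mat_scale_def of_real_0 fst_conv snd_conv)
qed

subsection \<open>Conjugacy invariants\<close>

definition mat_conj :: "complex \<times> complex \<Rightarrow> complex \<times> complex \<Rightarrow> complex \<times> complex" where
  "mat_conj Q P = mat_mult (mat_adj Q) (mat_mult P Q)"

text \<open>\<open>trace_ratio P = (tr P)^2 / (4 det P)\<close> is below, equal to or above 1 according as \<open>P\<close> is
  elliptic, parabolic or hyperbolic. For parabolic \<open>P\<close> the sign of \<open>parabolic_sign P\<close> is a further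
  conjugacy invariant; it changes under inversion.\<close>

definition trace_ratio :: "complex \<times> complex \<Rightarrow> real" where
  "trace_ratio P = (Re (fst P))^2 / mat_det P"

definition parabolic_sign :: "complex \<times> complex \<Rightarrow> real" where
  "parabolic_sign P = Re (fst P) * Im (fst P) / mat_det P"

lemma trace_ratio_scale: "k \<noteq> 0 \<Longrightarrow> trace_ratio (mat_scale k P) = trace_ratio P"
  unfolding trace_ratio_def mat_det_scale by (simp add: mat_scale_def power_mult_distrib)

lemma parabolic_sign_scale: "k \<noteq> 0 \<Longrightarrow> parabolic_sign (mat_scale k P) = parabolic_sign P"
  unfolding parabolic_sign_def mat_det_scale by (simp add: mat_scale_def power2_eq_square)

lemma mat_det_conj: "mat_det (mat_conj Q P) = (mat_det Q)^2 * mat_det P"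
  by (simp add: mat_conj_def mat_det_mult power2_eq_square)

lemma moeb_conj:
  assumes "mat_det Q > 0" "mat_det P > 0" "cmod z < 1"
  shows "moeb (mat_conj Q P) z = moeb (mat_adj Q) (moeb P (moeb Q z))"
  using assms by (simp add: mat_conj_def moeb_mult mat_det_mult moeb_in_disc)

lemma fst_mat_conj:
  "fst (mat_conj Q P) = of_real ((cmod (fst Q))^2) * fst P - of_real ((cmod (snd Q))^2) * cnj (fst P)
     + cnj (fst Q) * cnj (snd Q) * snd P - cnj (cnj (fst Q) * cnj (snd Q) * snd P)"
  unfolding complex_norm_square by (simp add: mat_conj_def mat_mult_def mat_adj_def algebra_simps)

lemma Re_fst_mat_conj: "Re (fst (mat_conj Q P)) = mat_det Q * Re (fst P)"
  unfolding fst_mat_conj mat_det_def by (simp add: algebra_simps)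

lemma Im_fst_mat_conj:
  "Im (fst (mat_conj Q P)) = ((cmod (fst Q))^2 + (cmod (snd Q))^2) * Im (fst P)
     + 2 * Im (cnj (fst Q) * cnj (snd Q) * snd P)"
  unfolding fst_mat_conj by (simp add: algebra_simps)

lemma trace_ratio_conj: "mat_det Q > 0 \<Longrightarrow> trace_ratio (mat_conj Q P) = trace_ratio P"
  by (simp add: trace_ratio_def mat_det_conj Re_fst_mat_conj power_mult_distrib power2_eq_square)

lemma trace_ratio_adj: "trace_ratio (mat_adj P) = trace_ratio P"
  unfolding trace_ratio_def mat_det_adj by (simp add: mat_adj_def)

lemma parabolic_sign_adj: "parabolic_sign (mat_adj P) = - parabolic_sign P"
  unfolding parabolic_sign_def mat_det_adj by (simp add: mat_adj_def)

lemma trace_ratio_mult_self: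
  assumes "mat_det P > 0"
  shows "trace_ratio (mat_mult P P) = (2 * trace_ratio P - 1)^2"
proof -
  have "Re (fst (mat_mult P P)) = Re (fst P * fst P) + (cmod (snd P))^2"
    by (simp add: mat_mult_def complex_mult_cnj cmod_power2)
  also have "\<dots> = 2 * (Re (fst P))^2 - mat_det P"
    unfolding mat_det_def cmod_power2[of "fst P"] by (simp add: power2_eq_square)
  finally have e: "Re (fst (mat_mult P P)) = 2 * (Re (fst P))^2 - mat_det P" .
  show ?thesis
    using assms unfolding trace_ratio_def mat_det_mult e by (simp add: field_simps power2_eq_square)
qed

text \<open>For parabolic \<open>P\<close> one has \<open>|snd P| = |Im (fst P)|\<close>, and conjugation scales
  \<open>Im (fst P)\<close> by \<open>|fst Q|^2 + |snd Q|^2\<close> up to an error of at most \<open>2 |fst Q| |snd Q| |Im (fst P)|\<close>.\<close>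

lemma Im_fst_mat_conj_same_sign:
  assumes Q: "mat_det Q > 0" and B: "cmod (snd P) = \<bar>Im (fst P)\<bar>" and I: "Im (fst P) \<noteq> 0"
  shows "Im (fst (mat_conj Q P)) * Im (fst P) > 0"
proof -
  define w where "w = cnj (fst Q) * cnj (snd Q) * snd P"
  have "\<bar>Im w\<bar> \<le> cmod (fst Q) * cmod (snd Q) * \<bar>Im (fst P)\<bar>"
    using abs_Im_le_cmod[of w] by (simp add: w_def norm_mult B)
  then have "\<bar>Im w\<bar> * \<bar>Im (fst P)\<bar> \<le> cmod (fst Q) * cmod (snd Q) * \<bar>Im (fst P)\<bar> * \<bar>Im (fst P)\<bar>"
    by (rule mult_right_mono) simp
  then have "\<bar>2 * Im w * Im (fst P)\<bar> \<le> 2 * cmod (fst Q) * cmod (snd Q) * (Im (fst P))^2"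
    by (simp add: abs_mult power2_eq_square mult.assoc flip: abs_mult)
  moreover have "2 * cmod (fst Q) * cmod (snd Q) < (cmod (fst Q))^2 + (cmod (snd Q))^2"
    using Q by (simp add: mat_det_pos_iff) (smt (verit) power2_diff zero_less_power2)
  then have "2 * cmod (fst Q) * cmod (snd Q) * (Im (fst P))^2
      < ((cmod (fst Q))^2 + (cmod (snd Q))^2) * (Im (fst P))^2"
    using I by (simp add: mult_strict_right_mono)
  moreover have "Im (fst (mat_conj Q P)) * Im (fst P)
      = ((cmod (fst Q))^2 + (cmod (snd Q))^2) * (Im (fst P))^2 + 2 * Im w * Im (fst P)"
    by (simp add: Im_fst_mat_conj w_def power2_eq_square algebra_simps)
  ultimately show ?thesis
    by linarith
qed

lemma parabolic_sign_conj:
  assumes Q: "mat_det Q > 0" and P: "mat_det P > 0" and t: "trace_ratio P = 1"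
    and s: "parabolic_sign P \<noteq> 0"
  shows "parabolic_sign (mat_conj Q P) * parabolic_sign P > 0"
proof -
  have ReA: "(Re (fst P))^2 = mat_det P"
    using t P by (simp add: trace_ratio_def)
  have I: "Im (fst P) \<noteq> 0" "Re (fst P) \<noteq> 0"
    using s by (auto simp: parabolic_sign_def)
  have "(cmod (snd P))^2 = (Im (fst P))^2"
    using ReA unfolding mat_det_def cmod_power2[of "fst P"] by simp
  then have "cmod (snd P) = \<bar>Im (fst P)\<bar>"
    by (metis abs_norm_cancel power2_eq_iff_nonneg abs_ge_zero norm_ge_zero real_sqrt_abs)
  note IQ = Im_fst_mat_conj_same_sign[OF Q this I(1)]
  have "parabolic_sign (mat_conj Q P) * parabolic_sign P
      = mat_det Q * (Re (fst P))^2 * (Im (fst (mat_conj Q P)) * Im (fst P))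
        / ((mat_det Q)^2 * mat_det P * mat_det P)"
    unfolding parabolic_sign_def mat_det_conj Re_fst_mat_conj by (simp add: power2_eq_square algebra_simps)
  then show ?thesis
    using Q P I IQ by simp
qed

lemma fixed_point_imp_trace_ratio_le_1:
  assumes R: "mat_det R > 0" and a: "cmod a < 1" and fp: "moeb R a = a"
  shows "trace_ratio R \<le> 1"
proof -
  let ?T = "mat_transl a"
  have T: "mat_det ?T > 0"
    using mat_det_transl_pos[OF a] .
  have C: "mat_det (mat_conj ?T R) > 0"
    using R T by (simp add: mat_det_conj)
  have "moeb (mat_conj ?T R) 0 = 0"
    using moeb_conj[OF T R, of 0] by (simp add: moeb_transl_0 fp moeb_adj_transl)
  then have "snd (mat_conj ?T R) = 0"
    using C by (auto simp: moeb_def mat_det_def)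
  then have "trace_ratio (mat_conj ?T R) \<le> 1"
    using C by (simp add: trace_ratio_def mat_det_def cmod_power2)
  then show ?thesis
    using trace_ratio_conj[OF T] by simp
qed

lemma fixed_point_deriv_1_imp_id:
  assumes R: "mat_det R > 0" and a: "cmod a < 1" and fp: "moeb R a = a"
    and d1: "moeb_deriv R a = 1"
  shows "moeb R z = z"
proof -
  obtain A B where RAB: "R = (A, B)" by fastforce
  define D where "D = cnj B * a + cnj A"
  have Dn: "D \<noteq> 0"
    using moeb_denom_nonzero[OF R a] by (simp add: moeb_denom_def RAB D_def)
  have B: "B = a * (D - A)"
    using fp Dn by (simp add: moeb_def RAB D_def field_simps)
  have D2: "D^2 = of_real (mat_det R)"
    using d1 Dn by (simp add: moeb_deriv_def moeb_denom_def RAB D_def field_simps)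
  have "Im D = 0"
  proof -
    have "Im (D^2) = 0" "Re (D^2) > 0"
      using D2 R by auto
    then show ?thesis
      by (auto simp: power2_eq_square)
  qed
  then have Dc: "cnj D = D"
    by (simp add: complex_eq_iff)
  have "D = cnj (a * (D - A)) * a + cnj A"
    using B D_def by simp
  then have "D = (cnj a * a) * D - (cnj a * a) * cnj A + cnj A"
    using Dc by (simp add: algebra_simps)
  then have "(1 - cnj a * a) * (D - cnj A) = 0"
    by (simp add: algebra_simps)
  moreover have "1 - cnj a * a \<noteq> 0"
    using norm_mult_less[of "cnj a" 1 a 1] a by auto
  ultimately have "A = D"
    using Dc by (metis complex_cnj_cnj eq_iff_diff_eq_0 mult_eq_0_iff)
  then have "B = 0" "cnj A = A" "A \<noteq> 0"
    using B Dc Dn by auto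
  then show ?thesis
    by (simp add: moeb_def RAB)
qed

lemma small_real_root:
  fixes y \<beta> :: real
  assumes "0 < \<beta>" "\<beta>^2 < y^2"
  obtains t where "t^2 - 2 * y * t + \<beta>^2 = 0" "t^2 < \<beta>^2"
proof -
  define s where "s = sqrt (y^2 - \<beta>^2)"
  have s: "s > 0" "s^2 = y^2 - \<beta>^2"
    using assms by (simp_all add: s_def)
  then have s2: "\<beta>^2 = y^2 - s^2"
    by simp
  show ?thesis
  proof (cases "y > 0")
    case True
    then have "y > s"
      using s assms by (auto intro: power2_less_imp_less)
    then have "(y - s)^2 < (y - s) * (y + s)"
      using s by (simp add: power2_eq_square)
    then show ?thesis
      using that[of "y - s"] unfolding s2 by (simp add: power2_eq_square algebra_simps)
  next
    case False
    then have "- y > s"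
      using s assms by (auto intro: power2_less_imp_less)
    then have "(y + s) * s < 0"
      using s by (intro mult_neg_pos) auto
    then have "(y + s)^2 < (y + s) * (y - s)"
      by (simp add: power2_eq_square algebra_simps)
    then show ?thesis
      using that[of "y + s"] unfolding s2 by (simp add: power2_eq_square algebra_simps)
  qed
qed

lemma trace_ratio_less_1_imp_fixed_point:
  assumes R: "mat_det R > 0" and t1: "trace_ratio R < 1"
  obtains a where "cmod a < 1" "moeb R a = a"
proof (cases "snd R = 0")
  case True
  then show ?thesis
    using that[of 0] by (simp add: moeb_def)
next
  case False
  obtain A B where RAB: "R = (A, B)" by fastforce
  have "(Re A)^2 < mat_det R"
    using t1 R by (simp add: trace_ratio_def RAB)
  then have "(cmod B)^2 < (Im A)^2"
    using cmod_power2[of A] by (simp add: mat_det_def RAB)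
  moreover have "0 < cmod B"
    using False by (simp add: RAB)
  ultimately obtain t where t: "t^2 - 2 * Im A * t + (cmod B)^2 = 0" "t^2 < (cmod B)^2"
    using small_real_root by blast
  define a where "a = \<i> * of_real t / cnj B"
  have na: "cmod a < 1"
    using t(2) False power2_less_imp_less[of "\<bar>t\<bar>" "cmod B"]
    by (simp add: a_def RAB norm_divide norm_mult)
  have hA: "cnj A - A = - (2 * \<i> * of_real (Im A))"
    by (simp add: complex_eq_iff)
  have "cnj B * a^2 + (cnj A - A) * a - B = of_real (- (t^2) + 2 * Im A * t - (cmod B)^2) / cnj B"
    unfolding hA a_def using False complex_norm_square[of B]
    by (simp add: RAB field_simps power2_eq_square)
  also have "\<dots> = 0"
    using t(1) by (simp add: algebra_simps)
  finally have "A * a + B = a * (cnj B * a + cnj A)"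
    by (simp add: algebra_simps power2_eq_square)
  then have "moeb R a = a"
    using moeb_denom_nonzero[OF R na] by (simp add: moeb_def moeb_denom_def RAB field_simps)
  then show ?thesis
    using that na by blast
qed

lemma moeb_eq_if_same_1_jet:
  assumes P: "mat_det P > 0" and Q: "mat_det Q > 0" and a: "cmod a < 1"
    and eq: "moeb P a = moeb Q a" and deq: "moeb_deriv P a = moeb_deriv Q a" and z: "cmod z < 1"
  shows "moeb P z = moeb Q z"
proof -
  define R where "R = mat_mult (mat_adj Q) P"
  have R: "mat_det R > 0"
    using P Q by (simp add: R_def mat_det_mult)
  have "moeb R a = a"
    using moeb_mult[of "mat_adj Q" P a] P Q a eq moeb_adj_moeb[OF Q a] by (simp add: R_def)
  moreover have "moeb_deriv R a = 1"
    using moeb_deriv_mult[of "mat_adj Q" P a] P Q a eq deq moeb_deriv_adj_mult[OF Q a]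
    by (simp add: R_def)
  ultimately have "moeb R z = z"
    by (rule fixed_point_deriv_1_imp_id[OF R a])
  then have "moeb (mat_adj Q) (moeb P z) = z"
    using moeb_mult[of "mat_adj Q" P z] P Q z by (simp add: R_def)
  then show ?thesis
    using moeb_moeb_adj[OF Q moeb_in_disc[OF P z]] by simp
qed

definition fixed_point_free :: "complex \<times> complex \<Rightarrow> bool" where
  "fixed_point_free P \<longleftrightarrow> mat_det P > 0 \<and> (\<forall>w. cmod w < 1 \<longrightarrow> moeb P w \<noteq> w)"

definition moeb_conjugate :: "complex \<times> complex \<Rightarrow> complex \<times> complex \<Rightarrow> bool" where
  "moeb_conjugate X Y \<longleftrightarrow>
     (\<exists>M. mat_det M > 0 \<and> (\<forall>z. cmod z < 1 \<longrightarrow> moeb (mat_conj M Y) z = moeb X z))"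

lemma fixed_point_free_snd_nonzero: "fixed_point_free P \<Longrightarrow> snd P \<noteq> 0"
  unfolding fixed_point_free_def by (metis moeb_def mult_zero_right add_0 div_0 norm_zero zero_less_one)

lemma fixed_point_free_trace_ratio_ge_1:
  assumes "fixed_point_free P"
  shows "trace_ratio P \<ge> 1"
proof (rule ccontr)
  assume "\<not> trace_ratio P \<ge> 1"
  then obtain a where "cmod a < 1" "moeb P a = a"
    using trace_ratio_less_1_imp_fixed_point[of P] assms by (auto simp: fixed_point_free_def)
  then show False
    using assms by (auto simp: fixed_point_free_def)
qed

lemma fixed_point_free_parabolic_sign_nonzero:
  assumes P: "fixed_point_free P" and t: "trace_ratio P = 1"
  shows "parabolic_sign P \<noteq> 0"
proof
  assume s: "parabolic_sign P = 0"
  have d: "mat_det P > 0"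
    using P by (simp add: fixed_point_free_def)
  then have ReA: "(Re (fst P))^2 = mat_det P"
    using t by (simp add: trace_ratio_def)
  then have "Im (fst P) = 0"
    using s d by (auto simp: parabolic_sign_def)
  then have "(cmod (snd P))^2 = 0"
    using ReA cmod_power2[of "fst P"] by (simp add: mat_det_def)
  then show False
    using fixed_point_free_snd_nonzero[OF P] by simp
qed

lemma fixed_point_free_adj:
  assumes "fixed_point_free P"
  shows "fixed_point_free (mat_adj P)"
  unfolding fixed_point_free_def
proof (intro conjI allI impI notI)
  show "mat_det (mat_adj P) > 0"
    using assms by (simp add: fixed_point_free_def)
  fix w :: complex
  assume "cmod w < 1" "moeb (mat_adj P) w = w"
  then show False
    using moeb_moeb_adj[of P w] assms by (auto simp: fixed_point_free_def)
qed

lemma trace_ratio_greater_1_imp_fixed_point_free: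
  assumes "mat_det P > 0" "trace_ratio P > 1"
  shows "fixed_point_free P"
  using fixed_point_imp_trace_ratio_le_1[OF assms(1)] assms by (auto simp: fixed_point_free_def)

lemma moeb_conjugate_invariants:
  assumes conj: "moeb_conjugate X Y" and X: "mat_det X > 0" and Y: "mat_det Y > 0"
  shows "trace_ratio X = trace_ratio Y"
    and "trace_ratio Y = 1 \<Longrightarrow> parabolic_sign Y \<noteq> 0 \<Longrightarrow> parabolic_sign X * parabolic_sign Y > 0"
proof -
  obtain M where M: "mat_det M > 0" and eq: "\<And>z. cmod z < 1 \<Longrightarrow> moeb (mat_conj M Y) z = moeb X z"
    using conj by (auto simp: moeb_conjugate_def)
  have C: "mat_det (mat_conj M Y) > 0"
    using M Y by (simp add: mat_det_conj)
  obtain k where k: "k \<noteq> 0" "mat_conj M Y = mat_scale k X"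
    by (rule moeb_eq_imp_mat_scale[of X "mat_conj M Y"]) (use eq X C in auto)
  show "trace_ratio X = trace_ratio Y"
    using trace_ratio_scale[OF k(1), of X] k(2) trace_ratio_conj[OF M, of Y] by simp
  show "parabolic_sign X * parabolic_sign Y > 0" if "trace_ratio Y = 1" "parabolic_sign Y \<noteq> 0"
    using parabolic_sign_conj[OF M Y that] k parabolic_sign_scale[OF k(1), of X] by simp
qed

lemma trace_ratio_mult_self_greater:
  assumes "mat_det P > 0" "trace_ratio P > 1"
  shows "trace_ratio (mat_mult P P) > trace_ratio P"
proof -
  have "(2 * trace_ratio P - 1)^2 - trace_ratio P = (4 * trace_ratio P - 1) * (trace_ratio P - 1)"
    by (simp add: power2_eq_square algebra_simps)
  moreover have "(4 * trace_ratio P - 1) * (trace_ratio P - 1) > 0"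
    using assms(2) by simp
  ultimately show ?thesis
    using trace_ratio_mult_self[OF assms(1)] by linarith
qed

lemma not_moeb_conjugate:
  assumes "fixed_point_free X" "fixed_point_free Y"
    and "trace_ratio X \<noteq> trace_ratio Y \<or>
      (trace_ratio Y = 1 \<and> parabolic_sign Y \<noteq> 0 \<and> \<not> parabolic_sign X * parabolic_sign Y > 0)"
  shows "\<not> moeb_conjugate X Y"
proof
  assume "moeb_conjugate X Y"
  moreover have "mat_det X > 0" "mat_det Y > 0"
    using assms(1,2) by (auto simp: fixed_point_free_def)
  ultimately show False
    using moeb_conjugate_invariants assms(3) by blast
qed

text \<open>Two fixed-point-free maps need not be non-conjugate, but replacing a hyperbolic map by its
  square (which raises \<open>trace_ratio\<close>) or a parabolic map by its inverse (which flips
  \<open>parabolic_sign\<close>) always produces a non-conjugate pair.\<close>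

lemma nonconjugate_variant:
  assumes P: "fixed_point_free P" and Q: "fixed_point_free Q"
  obtains X Y where "X = P \<or> X = mat_mult P P" "Y = Q \<or> Y = mat_adj Q"
    "fixed_point_free X" "fixed_point_free Y" "\<not> moeb_conjugate X Y"
proof -
  have dP: "mat_det P > 0"
    using P by (simp add: fixed_point_free_def)
  consider "trace_ratio P \<noteq> trace_ratio Q" | "trace_ratio P = trace_ratio Q" "trace_ratio P > 1"
    | "trace_ratio P = 1" "trace_ratio Q = 1"
    using fixed_point_free_trace_ratio_ge_1[OF P] fixed_point_free_trace_ratio_ge_1[OF Q] by linarith
  then show ?thesis
  proof cases
    case 1
    then show ?thesis
      by (intro that[of P Q] not_moeb_conjugate[OF P Q]) (use P Q in auto)
  next
    case 2
    then have gt: "trace_ratio (mat_mult P P) > trace_ratio P"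
      using trace_ratio_mult_self_greater[OF dP] by simp
    then have "fixed_point_free (mat_mult P P)"
      using 2 dP by (intro trace_ratio_greater_1_imp_fixed_point_free) (auto simp: mat_det_mult)
    then show ?thesis
      by (intro that[of "mat_mult P P" Q] not_moeb_conjugate[OF _ Q]) (use 2 gt Q in auto)
  next
    case 3
    note s = fixed_point_free_parabolic_sign_nonzero[OF P 3(1)] fixed_point_free_parabolic_sign_nonzero[OF Q 3(2)]
    show ?thesis
    proof (cases "parabolic_sign P * parabolic_sign Q > 0")
      case True
      then have "\<not> parabolic_sign P * parabolic_sign (mat_adj Q) > 0"
        by (simp add: parabolic_sign_adj)
      then show ?thesis
        by (intro that[of P "mat_adj Q"] not_moeb_conjugate[OF P fixed_point_free_adj[OF Q]])
          (use 3 s P fixed_point_free_adj[OF Q] in \<open>auto simp: trace_ratio_adj parabolic_sign_adj\<close>)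
    next
      case False
      then show ?thesis
        by (intro that[of P Q] not_moeb_conjugate[OF P Q]) (use 3 s P Q in auto)
    qed
  qed
qed

subsection \<open>Displacement and two-point transitivity\<close>

definition pseudo_dist :: "complex \<Rightarrow> complex \<Rightarrow> real" where
  "pseudo_dist x y = cmod (moeb (mat_adj (mat_transl y)) x)"

definition displacement :: "complex \<times> complex \<Rightarrow> complex \<Rightarrow> real" where
  "displacement P w = pseudo_dist (moeb P w) w"

lemma pseudo_dist_less_1: "cmod x < 1 \<Longrightarrow> cmod y < 1 \<Longrightarrow> pseudo_dist x y < 1"
  unfolding pseudo_dist_def by (rule moeb_in_disc) (simp_all add: mat_det_transl_pos)

lemma moeb_rotation:
  assumes "cmod \<alpha> = 1"
  shows "mat_det (csqrt \<alpha>, 0) > 0" "moeb (csqrt \<alpha>, 0) w = \<alpha> * w"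
proof -
  have n: "cmod (csqrt \<alpha>) = 1"
    using assms by simp
  then show "mat_det (csqrt \<alpha>, 0) > 0"
    by (simp add: mat_det_def)
  have "csqrt \<alpha> * cnj (csqrt \<alpha>) = 1"
    using n complex_norm_square[of "csqrt \<alpha>"] by simp
  moreover have "csqrt \<alpha> \<noteq> 0"
    using assms by auto
  ultimately have "cnj (csqrt \<alpha>) = 1 / csqrt \<alpha>"
    by (simp add: field_simps mult.commute)
  then have "csqrt \<alpha> / cnj (csqrt \<alpha>) = \<alpha>"
    by (simp flip: power2_eq_square)
  moreover have "moeb (csqrt \<alpha>, 0) w = csqrt \<alpha> / cnj (csqrt \<alpha>) * w"
    by (simp add: moeb_def)
  ultimately show "moeb (csqrt \<alpha>, 0) w = \<alpha> * w"
    by simp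
qed

lemma moeb_two_point_transitive:
  assumes a: "cmod a < 1" "cmod a' < 1" and s: "cmod s < 1" "cmod s' < 1" and ne: "a \<noteq> a'"
    and eq: "pseudo_dist a' a = pseudo_dist s' s"
  obtains M where "mat_det M > 0" "moeb M a = s" "moeb M a' = s'"
proof -
  define x where "x = moeb (mat_adj (mat_transl a)) a'"
  define y where "y = moeb (mat_adj (mat_transl s)) s'"
  have Ta: "mat_det (mat_transl a) > 0" "mat_det (mat_adj (mat_transl a)) > 0"
    using mat_det_transl_pos[OF a(1)] by auto
  have Ts: "mat_det (mat_transl s) > 0"
    using mat_det_transl_pos[OF s(1)] .
  have x0: "x \<noteq> 0"
    using moeb_moeb_adj[OF Ta(1) a(2)] ne by (auto simp: x_def moeb_transl_0)
  moreover have "cmod y = cmod x"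
    using eq by (simp add: pseudo_dist_def x_def y_def)
  ultimately have "cmod (y / x) = 1"
    by (simp add: norm_divide)
  note rot = moeb_rotation[OF this]
  define M where "M = mat_mult (mat_transl s) (mat_mult (csqrt (y / x), 0) (mat_adj (mat_transl a)))"
  have d1: "mat_det (mat_mult (csqrt (y / x), 0) (mat_adj (mat_transl a))) > 0"
    using rot Ta by (simp add: mat_det_mult)
  have Mz: "moeb M z = moeb (mat_transl s) (y / x * moeb (mat_adj (mat_transl a)) z)" if "cmod z < 1" for z
    using moeb_mult[OF Ts d1 that] moeb_mult[OF rot(1) Ta(2) that] rot(2) by (simp add: M_def)
  show ?thesis
  proof
    show "mat_det M > 0"
      using Ts d1 by (simp add: M_def mat_det_mult)
    show "moeb M a = s"
      using Mz[OF a(1)] by (simp add: moeb_adj_transl moeb_transl_0)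
    show "moeb M a' = s'"
      using Mz[OF a(2)] x0 moeb_moeb_adj[OF Ts s(2)] by (simp add: x_def[symmetric] y_def)
  qed
qed

definition displacement_denom :: "complex \<times> complex \<Rightarrow> complex \<Rightarrow> complex" where
  "displacement_denom P w = cnj (snd P) * w + cnj (fst P) - fst P * w * cnj w - snd P * cnj w"

lemma displacement_identity:
  assumes P: "mat_det P > 0" and w: "cmod w < 1"
  shows "displacement_denom P w \<noteq> 0"
    and "1 - (displacement P w)^2 = mat_det P * (1 - (cmod w)^2)^2 / (cmod (displacement_denom P w))^2"
proof -
  define m where "m = moeb P w"
  have m: "cmod m < 1"
    using moeb_in_disc[OF P w] by (simp add: m_def)
  have T: "mat_det (mat_adj (mat_transl w)) > 0"
    using mat_det_transl_pos[OF w] by simp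
  have dn: "moeb_denom P w \<noteq> 0"
    using moeb_denom_nonzero[OF P w] .
  have G: "moeb_denom (mat_adj (mat_transl w)) m = displacement_denom P w / moeb_denom P w"
    using dn by (simp add: m_def moeb_denom_def moeb_def mat_adj_def mat_transl_def displacement_denom_def field_simps)
  then show Gn: "displacement_denom P w \<noteq> 0"
    using moeb_denom_nonzero[OF T m] by auto
  have "1 - (displacement P w)^2
      = mat_det (mat_adj (mat_transl w)) * (1 - (cmod m)^2) / (cmod (moeb_denom (mat_adj (mat_transl w)) m))^2"
    unfolding displacement_def pseudo_dist_def m_def[symmetric] by (rule moeb_norm_identity[OF T m])
  also have "\<dots> = (1 - (cmod w)^2) * (mat_det P * (1 - (cmod w)^2) / (cmod (moeb_denom P w))^2)
      / ((cmod (displacement_denom P w))^2 / (cmod (moeb_denom P w))^2)"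
    unfolding G using moeb_norm_identity[OF P w] by (simp add: m_def mat_det_transl norm_divide power_divide)
  also have "\<dots> = mat_det P * (1 - (cmod w)^2)^2 / (cmod (displacement_denom P w))^2"
    using dn Gn by (simp add: field_simps power2_eq_square)
  finally show "1 - (displacement P w)^2 = \<dots>" .
qed

lemma displacement_denom_nonzero_on_circle:
  assumes "snd P \<noteq> 0"
  obtains \<xi> where "cmod \<xi> = 1" "displacement_denom P \<xi> \<noteq> 0"
proof -
  obtain A B where PAB: "P = (A, B)" by fastforce
  define \<sigma> :: real where "\<sigma> = (if Im A = cmod B then -1 else 1)"
  have sne: "\<sigma> * cmod B \<noteq> Im A"
    using assms by (auto simp: \<sigma>_def PAB)
  define \<xi> where "\<xi> = \<i> * of_real \<sigma> * B / of_real (cmod B)"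
  have hB: "B * cnj B = of_real ((cmod B)^2)"
    by (rule complex_norm_square[symmetric])
  have nB: "complex_of_real (cmod B) \<noteq> 0"
    using assms by (simp add: PAB)
  have nxi: "cmod \<xi> = 1"
    using assms by (simp add: \<xi>_def PAB norm_mult norm_divide \<sigma>_def)
  have e1: "cnj B * \<xi> = \<i> * of_real (\<sigma> * cmod B)"
    unfolding \<xi>_def using nB hB by (simp add: field_simps power2_eq_square mult.commute)
  have e2: "B * cnj \<xi> = - \<i> * of_real (\<sigma> * cmod B)"
    unfolding \<xi>_def using nB hB by (simp add: field_simps power2_eq_square mult.commute)
  have e3: "cnj A - A = - (2 * \<i> * of_real (Im A))"
    by (simp add: complex_eq_iff)
  have "displacement_denom P \<xi> = cnj B * \<xi> + (cnj A - A * (\<xi> * cnj \<xi>)) - B * cnj \<xi>"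
    by (simp add: displacement_denom_def PAB algebra_simps)
  also have "\<dots> = \<i> * of_real (\<sigma> * cmod B) + (cnj A - A) + \<i> * of_real (\<sigma> * cmod B)"
    unfolding e1 e2 using complex_norm_square[of \<xi>] nxi by simp
  also have "\<dots> = 2 * \<i> * of_real (\<sigma> * cmod B - Im A)"
    unfolding e3 by (simp add: algebra_simps)
  finally show ?thesis
    using that nxi sne by (auto simp del: of_real_diff of_real_mult)
qed

lemma radial_displacement_defect_tendsto_0:
  assumes "displacement_denom P \<xi> \<noteq> 0"
  shows "((\<lambda>t. mat_det P * (1 - t^2)^2 / (cmod (displacement_denom P (of_real t * \<xi>)))^2) \<longlongrightarrow> 0)
    (at_left 1)"
proof -
  have "isCont (\<lambda>t::real. displacement_denom P (of_real t * \<xi>)) 1"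
    unfolding displacement_denom_def by (intro continuous_intros)
  then have "((\<lambda>t. displacement_denom P (of_real t * \<xi>))
      \<longlongrightarrow> displacement_denom P (of_real 1 * \<xi>)) (at 1)"
    by (rule isContD)
  then have "((\<lambda>t. displacement_denom P (of_real t * \<xi>)) \<longlongrightarrow> displacement_denom P \<xi>) (at_left 1)"
    by (simp add: tendsto_mono[OF at_within_le_at])
  then have den: "((\<lambda>t. (cmod (displacement_denom P (of_real t * \<xi>)))^2)
      \<longlongrightarrow> (cmod (displacement_denom P \<xi>))^2) (at_left 1)"
    by (intro tendsto_power tendsto_norm)
  have num: "((\<lambda>t::real. mat_det P * (1 - t^2)^2) \<longlongrightarrow> mat_det P * (1 - 1^2)^2) (at_left 1)"
    by (intro tendsto_intros)
  show ?thesis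
    using tendsto_divide[OF num den] assms by simp
qed

text \<open>By \<open>displacement_identity\<close>, the previous limit is \<open>1 - displacement\<^sup>2\<close> along a radius.\<close>

lemma displacement_approaches_1:
  assumes P: "mat_det P > 0" and B: "snd P \<noteq> 0" and d: "d < 1"
  obtains w where "cmod w < 1" "d \<le> displacement P w"
proof -
  obtain \<xi> where \<xi>: "cmod \<xi> = 1" "displacement_denom P \<xi> \<noteq> 0"
    using displacement_denom_nonzero_on_circle[OF B] by blast
  define d' where "d' = max d 0"
  have "0 < 1 - d'^2"
    using d abs_square_less_1[of d'] by (simp add: d'_def)
  then have ev1: "eventually (\<lambda>t. mat_det P * (1 - t^2)^2 / (cmod (displacement_denom P (of_real t * \<xi>)))^2
      < 1 - d'^2) (at_left 1)"
    using order_tendstoD(2)[OF radial_displacement_defect_tendsto_0[OF \<xi>(2)]] by blast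
  have ev2: "eventually (\<lambda>t. t \<in> {0<..<(1::real)}) (at_left 1)"
    by (rule eventually_at_left_real) simp
  obtain t where t: "0 < t" "t < 1"
    "mat_det P * (1 - t^2)^2 / (cmod (displacement_denom P (of_real t * \<xi>)))^2 < 1 - d'^2"
    using eventually_happens[OF eventually_conj[OF ev1 ev2]] trivial_limit_at_left_real by auto
  define w where "w = of_real t * \<xi>"
  have w: "cmod w = t" "cmod w < 1"
    using \<xi> t by (simp_all add: w_def norm_mult)
  then have "d'^2 < (displacement P w)^2"
    using displacement_identity(2)[OF P w(2)] t(3) by (simp add: w_def)
  then have "d' < displacement P w"
    using power2_less_imp_less[of d' "displacement P w"] by (simp add: displacement_def pseudo_dist_def)
  then show ?thesis
    using that[of w] w(2) by (simp add: d'_def)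
qed

lemma continuous_on_displacement:
  assumes P: "mat_det P > 0"
  shows "continuous_on (ball 0 1) (displacement P)"
proof -
  have e: "displacement P w = cmod ((moeb P w - w) / (1 - cnj w * moeb P w))" for w
    by (simp add: displacement_def pseudo_dist_def moeb_adj_transl_eq)
  have cm: "continuous_on (ball 0 1) (moeb P)"
    using holomorphic_on_moeb[OF P] holomorphic_on_imp_continuous_on by blast
  have nz: "cnj w * moeb P w \<noteq> 1" if "cmod w < 1" for w
    using norm_mult_less[of "cnj w" 1 "moeb P w" 1] moeb_in_disc[OF P that] that by auto
  show ?thesis
    unfolding e by (intro continuous_intros cm) (auto dest: nz)
qed

lemma displacement_attains:
  assumes P: "mat_det P > 0" and B: "snd P \<noteq> 0" and d0: "displacement P 0 \<le> d" and d1: "d < 1"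
  obtains a where "cmod a < 1" "displacement P a = d"
proof -
  obtain w where w: "cmod w < 1" "d \<le> displacement P w"
    using displacement_approaches_1[OF P B d1] by blast
  have tw: "cmod (of_real t * w) < 1" if "t \<in> {0..1}" for t :: real
    using that w(1) mult_left_le_one_le[of "cmod w" t] by (simp add: norm_mult)
  then have sub: "(\<lambda>t::real. of_real t * w) ` {0..1} \<subseteq> ball 0 1"
    by auto
  have "continuous_on {0..1} (\<lambda>t::real. displacement P (of_real t * w))"
    by (rule continuous_on_compose2[OF continuous_on_displacement[OF P] _ sub]) (intro continuous_intros)
  then obtain t where t: "0 \<le> t" "t \<le> 1" "displacement P (of_real t * w) = d"
    using IVT'[of "\<lambda>t. displacement P (of_real t * w)" 0 d 1] d0 w by auto
  show ?thesis
    by (rule that[OF tw t(3)]) (use t in simp)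
qed

lemma displacement_common_value:
  assumes "mat_det P > 0" "snd P \<noteq> 0" "mat_det Q > 0" "snd Q \<noteq> 0"
  obtains a s where "cmod a < 1" "cmod s < 1" "displacement P a = displacement Q s"
proof -
  have l: "displacement P 0 < 1" "displacement Q 0 < 1"
    using pseudo_dist_less_1[OF moeb_in_disc[OF assms(1)], of 0 0]
      pseudo_dist_less_1[OF moeb_in_disc[OF assms(3)], of 0 0]
    by (simp_all add: displacement_def)
  show ?thesis
  proof (cases "displacement P 0 \<le> displacement Q 0")
    case True
    then obtain a where "cmod a < 1" "displacement P a = displacement Q 0"
      using displacement_attains[OF assms(1,2) _ l(2)] by blast
    then show ?thesis
      by (intro that[of a 0]) simp_all
  next
    case False
    then have "displacement Q 0 \<le> displacement P 0"
      by simp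
    then obtain s where "cmod s < 1" "displacement Q s = displacement P 0"
      using displacement_attains[OF assms(3,4) _ l(1)] by blast
    then show ?thesis
      by (intro that[of 0 s]) simp_all
  qed
qed

text \<open>For non-conjugate fixed-point-free \<open>X\<close> and \<open>Y\<close> there is a disc automorphism \<open>M\<close>
  carrying the pair \<open>(a, X a)\<close> to a pair \<open>(s, Y s)\<close> (possible once \<open>X\<close> and \<open>Y\<close> have a
  common displacement), and \<open>M \<circ> X\<close> and \<open>Y \<circ> M\<close> then agree at \<open>a\<close> but not to first order,
  since otherwise \<open>X = M\<^sup>-\<^sup>1 Y M\<close>.\<close>

lemma nonconjugate_first_order_mismatch:
  assumes X: "fixed_point_free X" and Y: "fixed_point_free Y" and nc: "\<not> moeb_conjugate X Y"
  obtains M a where "mat_det M > 0" "cmod a < 1" "moeb X a \<noteq> a"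
    "moeb M (moeb X a) = moeb Y (moeb M a)"
    "moeb_deriv X a * moeb_deriv M (moeb X a) \<noteq> moeb_deriv Y (moeb M a) * moeb_deriv M a"
proof -
  have dX: "mat_det X > 0" and dY: "mat_det Y > 0"
    using X Y by (auto simp: fixed_point_free_def)
  obtain a s where as: "cmod a < 1" "cmod s < 1" "displacement X a = displacement Y s"
    using displacement_common_value[OF dX fixed_point_free_snd_nonzero[OF X]
        dY fixed_point_free_snd_nonzero[OF Y]] by blast
  have ne: "a \<noteq> moeb X a"
    using X as(1) by (auto simp: fixed_point_free_def)
  have "pseudo_dist (moeb X a) a = pseudo_dist (moeb Y s) s"
    using as(3) by (simp add: displacement_def)
  then obtain M where M: "mat_det M > 0" "moeb M a = s" "moeb M (moeb X a) = moeb Y s"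
    using moeb_two_point_transitive[OF as(1) moeb_in_disc[OF dX as(1)] as(2) moeb_in_disc[OF dY as(2)] ne]
    by blast
  show ?thesis
  proof (rule that[OF M(1) as(1) ne[symmetric]])
    show "moeb M (moeb X a) = moeb Y (moeb M a)"
      using M by simp
    show "moeb_deriv X a * moeb_deriv M (moeb X a) \<noteq> moeb_deriv Y (moeb M a) * moeb_deriv M a"
    proof
      assume deq: "moeb_deriv X a * moeb_deriv M (moeb X a) = moeb_deriv Y (moeb M a) * moeb_deriv M a"
      have MX: "mat_det (mat_mult M X) > 0" and YM: "mat_det (mat_mult Y M) > 0"
        using dX dY M(1) by (simp_all add: mat_det_mult)
      have "moeb (mat_conj M Y) z = moeb X z" if z: "cmod z < 1" for z
      proof -
        have "moeb (mat_mult M X) z = moeb (mat_mult Y M) z"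
          using moeb_eq_if_same_1_jet[OF MX YM as(1) _ _ z] dX dY M deq as(1)
          by (simp add: moeb_mult moeb_deriv_mult mult.commute)
        then have "moeb M (moeb X z) = moeb Y (moeb M z)"
          using dX dY M(1) z by (simp add: moeb_mult)
        then show ?thesis
          using moeb_conj[OF M(1) dY z] moeb_adj_moeb[OF M(1) moeb_in_disc[OF dX z]] by simp
      qed
      then have "moeb_conjugate X Y"
        using M(1) unfolding moeb_conjugate_def by blast
      with nc show False ..
    qed
  qed
qed

section \<open>Holomorphic coverings by the disc\<close>

lemma holomorphic_on_compose_disc:
  assumes "f holomorphic_on ball 0 1" "g holomorphic_on ball 0 1" "\<And>z. cmod z < 1 \<Longrightarrow> cmod (g z) < 1"
  shows "(\<lambda>z. f (g z)) holomorphic_on ball 0 1"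
  using holomorphic_on_compose_gen[OF assms(2,1)] assms(3) by (simp add: o_def image_subset_iff)

lemma holomorphic_on_disc_DERIV:
  "f holomorphic_on ball 0 1 \<Longrightarrow> cmod w < 1 \<Longrightarrow> (f has_field_derivative deriv f w) (at w)"
  using holomorphic_derivI[of f "ball 0 1" w UNIV] by simp

lemma deriv_compose_disc:
  assumes hq: "q holomorphic_on ball 0 1" and hg: "g holomorphic_on ball 0 1"
    and gim: "\<And>z. cmod z < 1 \<Longrightarrow> cmod (g z) < 1"
    and eq: "\<And>z. cmod z < 1 \<Longrightarrow> f z = q (g z)" and w: "cmod w < 1"
  shows "deriv f w = deriv q (g w) * deriv g w"
proof -
  have "(q \<circ> g has_field_derivative deriv q (g w) * deriv g w) (at w)"
    by (rule DERIV_chain[OF holomorphic_on_disc_DERIV[OF hq gim[OF w]] holomorphic_on_disc_DERIV[OF hg w]])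
  then have "(f has_field_derivative deriv q (g w) * deriv g w) (at w)"
    by (rule has_field_derivative_transform_within_open[of _ _ _ "ball 0 1"]) (use w eq in auto)
  then show ?thesis
    by (rule DERIV_imp_deriv)
qed

lemma deriv_compose_moeb:
  assumes "p holomorphic_on ball 0 1" "mat_det P > 0" "cmod w < 1"
  shows "deriv (\<lambda>z. p (moeb P z)) w = deriv p (moeb P w) * moeb_deriv P w"
  using DERIV_chain[OF holomorphic_on_disc_DERIV[OF assms(1) moeb_in_disc[OF assms(2,3)]]
      has_field_derivative_moeb[OF moeb_denom_nonzero[OF assms(2,3)]]]
  by (simp add: o_def DERIV_imp_deriv)

lemma holomorphic_lift_disc_covering:
  assumes cov: "covering_space (ball 0 1) p D" and hp: "p holomorphic_on ball 0 1"
    and hf: "f holomorphic_on ball 0 1" and fim: "f \<in> ball 0 1 \<rightarrow> D"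
    and w0: "cmod w0 < 1" and f0: "f 0 = p w0"
  obtains g where "g holomorphic_on ball 0 1" "\<And>z. cmod z < 1 \<Longrightarrow> cmod (g z) < 1" "g 0 = w0"
    "\<And>z. cmod z < 1 \<Longrightarrow> p (g z) = f z"
proof -
  obtain g where g: "continuous_on (ball 0 1) g" "g \<in> ball 0 1 \<rightarrow> ball 0 1" "g 0 = w0"
      "\<And>y. y \<in> ball 0 1 \<Longrightarrow> p (g y) = f y"
    using covering_space_lift_strong[OF cov _ _ convex_imp_simply_connected convex_imp_locally_path_connected
        holomorphic_on_imp_continuous_on[OF hf] fim, of w0 0] w0 f0 by auto
  have "g holomorphic_on ball 0 1"
    by (rule covering_space_lift_is_holomorphic[OF cov open_ball hp hf fim g(2,1)]) (use g(4) in auto)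
  then show ?thesis
    by (rule that) (use g in auto)
qed

lemma covering_self_lift_unique:
  assumes cov: "covering_space (ball 0 1) p D"
    and g1: "continuous_on (ball 0 1) g1" "\<And>z. cmod z < 1 \<Longrightarrow> cmod (g1 z) < 1"
      "\<And>z. cmod z < 1 \<Longrightarrow> p (g1 z) = p z"
    and g2: "continuous_on (ball 0 1) g2" "\<And>z. cmod z < 1 \<Longrightarrow> cmod (g2 z) < 1"
      "\<And>z. cmod z < 1 \<Longrightarrow> p (g2 z) = p z"
    and a: "cmod a < 1" "g1 a = g2 a" and x: "cmod x < 1"
  shows "g1 x = g2 x"
proof -
  have "continuous_on (ball 0 1) p" "p \<in> ball 0 1 \<rightarrow> D"
    using covering_space_imp_continuous[OF cov] covering_space_imp_surjective[OF cov] by auto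
  then show ?thesis
    by (rule covering_space_lift_unique[of "ball 0 1" p D g1 a g2 "ball 0 1" p x, rotated 2])
      (use cov g1 g2 a x in auto)
qed

lemma covering_deriv_nonzero:
  assumes cov: "covering_space (ball 0 1) p D" and hp: "p holomorphic_on ball 0 1" and w: "cmod w < 1"
  shows "deriv p w \<noteq> 0"
proof -
  obtain T U q where T: "w \<in> T" "openin (top_of_set (ball 0 1)) T" "homeomorphism T U p q"
    using covering_space_local_homeomorphism[OF cov, of w] w by (metis mem_ball_0)
  have "open T" "T \<subseteq> ball 0 1"
    using T(2) openin_open_trans openin_imp_subset by blast+
  moreover have "inj_on p T"
    using T(3) by (metis homeomorphism_def inj_on_inverseI)
  ultimately show ?thesis
    using holomorphic_injective_imp_regular[OF holomorphic_on_subset[OF hp]] T(1) by blast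
qed

lemma disc_automorphism_is_moeb:
  assumes hb: "b holomorphic_on ball 0 1" and bim: "\<And>z. cmod z < 1 \<Longrightarrow> cmod (b z) < 1"
    and hc: "c holomorphic_on ball 0 1" and cim: "\<And>z. cmod z < 1 \<Longrightarrow> cmod (c z) < 1"
    and cb: "\<And>z. cmod z < 1 \<Longrightarrow> c (b z) = z"
  obtains P where "mat_det P > 0" "\<And>z. cmod z < 1 \<Longrightarrow> b z = moeb P z"
proof -
  define T where "T = mat_transl (b 0)"
  have T: "mat_det T > 0" "mat_det (mat_adj T) > 0"
    using mat_det_transl_pos bim[of 0] by (auto simp: T_def)
  define h where "h z = moeb (mat_adj T) (b z)" for z
  define k where "k z = c (moeb T z)" for z
  have h: "h holomorphic_on ball 0 1" "h 0 = 0" "\<And>z. cmod z < 1 \<Longrightarrow> cmod (h z) < 1"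
    unfolding h_def using holomorphic_on_compose_disc[OF holomorphic_on_moeb[OF T(2)] hb] bim
      moeb_in_disc[OF T(2)] by (auto simp: T_def moeb_adj_transl)
  have k: "k holomorphic_on ball 0 1" "k 0 = 0" "\<And>z. cmod z < 1 \<Longrightarrow> cmod (k z) < 1"
    unfolding k_def using holomorphic_on_compose_disc[OF hc holomorphic_on_moeb[OF T(1)]] cim
      moeb_in_disc[OF T(1)] cb[of 0] by (auto simp: T_def moeb_transl_0)
  have hz: "cmod (h z) = cmod z" if "cmod z < 1" for z
  proof -
    have "k (h z) = z"
      using cb[OF that] moeb_moeb_adj[OF T(1) bim[OF that]] by (simp add: k_def h_def)
    then show ?thesis
      using Schwarz_Lemma(1)[OF h(1,2) h(3) that] Schwarz_Lemma(1)[OF k(1,2) k(3) h(3)[OF that]] by simp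
  qed
  have "\<exists>z. cmod z < 1 \<and> z \<noteq> 0 \<and> cmod (h z) = cmod z"
    using hz[of "1/2"] by (intro exI[of _ "1/2"]) simp
  then obtain \<alpha> where \<alpha>: "\<And>z. cmod z < 1 \<Longrightarrow> h z = \<alpha> * z" "cmod \<alpha> = 1"
    using Schwarz_Lemma(3)[OF h(1,2) h(3), of 0] by auto
  note R = moeb_rotation[OF \<alpha>(2)]
  show ?thesis
  proof (rule that)
    show "mat_det (mat_mult T (csqrt \<alpha>, 0)) > 0"
      using T R by (simp add: mat_det_mult)
    show "b z = moeb (mat_mult T (csqrt \<alpha>, 0)) z" if "cmod z < 1" for z
      using moeb_moeb_adj[OF T(1) bim[OF that]] \<alpha>(1)[OF that] moeb_mult[OF T(1) R(1) that] R(2)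
      by (simp add: h_def)
  qed
qed

definition moeb_deck :: "(complex \<Rightarrow> complex) \<Rightarrow> complex \<times> complex \<Rightarrow> bool" where
  "moeb_deck p P \<longleftrightarrow> mat_det P > 0 \<and> (\<forall>w. cmod w < 1 \<longrightarrow> p (moeb P w) = p w)"

lemma moeb_deck_mult_self: "moeb_deck p P \<Longrightarrow> moeb_deck p (mat_mult P P)"
  unfolding moeb_deck_def by (simp add: mat_det_mult moeb_mult moeb_in_disc)

lemma moeb_deck_adj:
  assumes "moeb_deck p P"
  shows "moeb_deck p (mat_adj P)"
  unfolding moeb_deck_def
proof (intro conjI allI impI)
  show "mat_det (mat_adj P) > 0"
    using assms by (simp add: moeb_deck_def)
  fix w :: complex
  assume w: "cmod w < 1"
  have "cmod (moeb (mat_adj P) w) < 1"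
    using assms moeb_in_disc[of "mat_adj P" w] w by (simp add: moeb_deck_def)
  then show "p (moeb (mat_adj P) w) = p w"
    using assms moeb_moeb_adj[of P w] w by (metis moeb_deck_def)
qed

lemma deck_deriv_eq:
  assumes hp: "p holomorphic_on ball 0 1" and deck: "moeb_deck p P" and w: "cmod w < 1"
  shows "deriv p (moeb P w) * moeb_deriv P w = deriv p w"
proof -
  have P: "mat_det P > 0" and eq: "\<And>w. cmod w < 1 \<Longrightarrow> p (moeb P w) = p w"
    using deck by (auto simp: moeb_deck_def)
  have "(p \<circ> moeb P has_field_derivative deriv p (moeb P w) * moeb_deriv P w) (at w)"
    by (rule DERIV_chain[OF holomorphic_on_disc_DERIV[OF hp moeb_in_disc[OF P w]]
          has_field_derivative_moeb[OF moeb_denom_nonzero[OF P w]]])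
  then have "(p has_field_derivative deriv p (moeb P w) * moeb_deriv P w) (at w)"
    by (rule has_field_derivative_transform_within_open[of _ _ _ "ball 0 1"]) (use w eq in auto)
  then show ?thesis
    using holomorphic_on_disc_DERIV[OF hp w] DERIV_unique by blast
qed

lemma self_lift_exists:
  assumes cov: "covering_space (ball 0 1) p D" and hp: "p holomorphic_on ball 0 1"
    and x: "cmod x < 1" and y: "cmod y < 1" and xy: "p x = p y"
  obtains b where "b holomorphic_on ball 0 1" "\<And>z. cmod z < 1 \<Longrightarrow> cmod (b z) < 1" "b x = y"
    "\<And>z. cmod z < 1 \<Longrightarrow> p (b z) = p z"
proof -
  define T where "T = mat_transl x"
  have T: "mat_det T > 0" "mat_det (mat_adj T) > 0"
    using mat_det_transl_pos[OF x] by (auto simp: T_def)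
  have fim: "(\<lambda>z. p (moeb T z)) \<in> ball 0 1 \<rightarrow> D"
    using covering_space_imp_surjective[OF cov] moeb_in_disc[OF T(1)] by auto
  have f0: "p (moeb T 0) = p y"
    by (simp add: T_def moeb_transl_0 xy)
  obtain g where g: "g holomorphic_on ball 0 1" "\<And>z. cmod z < 1 \<Longrightarrow> cmod (g z) < 1" "g 0 = y"
      "\<And>z. cmod z < 1 \<Longrightarrow> p (g z) = p (moeb T z)"
    using holomorphic_lift_disc_covering[OF cov hp
        holomorphic_on_compose_disc[OF hp holomorphic_on_moeb[OF T(1)] moeb_in_disc[OF T(1)]] fim y f0]
    by blast
  show ?thesis
  proof (rule that[of "\<lambda>w. g (moeb (mat_adj T) w)"])
    show "(\<lambda>w. g (moeb (mat_adj T) w)) holomorphic_on ball 0 1"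
      by (rule holomorphic_on_compose_disc[OF g(1) holomorphic_on_moeb[OF T(2)] moeb_in_disc[OF T(2)]])
    show "g (moeb (mat_adj T) x) = y"
      using g(3) by (simp add: T_def moeb_adj_transl)
    show "cmod (g (moeb (mat_adj T) z)) < 1" if "cmod z < 1" for z
      using g(2) moeb_in_disc[OF T(2) that] by blast
    show "p (g (moeb (mat_adj T) z)) = p z" if "cmod z < 1" for z
      using g(4)[OF moeb_in_disc[OF T(2) that]] moeb_moeb_adj[OF T(1) that] by simp
  qed
qed

lemma deck_transformation_exists:
  assumes cov: "covering_space (ball 0 1) p D" and hp: "p holomorphic_on ball 0 1"
    and u: "cmod u < 1" and v: "cmod v < 1" and uv: "u \<noteq> v" "p u = p v"
  obtains P where "fixed_point_free P" "moeb_deck p P"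
proof -
  obtain b where b: "b holomorphic_on ball 0 1" "\<And>z. cmod z < 1 \<Longrightarrow> cmod (b z) < 1" "b u = v"
      "\<And>z. cmod z < 1 \<Longrightarrow> p (b z) = p z"
    using self_lift_exists[OF cov hp u v uv(2)] by blast
  obtain c where c: "c holomorphic_on ball 0 1" "\<And>z. cmod z < 1 \<Longrightarrow> cmod (c z) < 1" "c v = u"
      "\<And>z. cmod z < 1 \<Longrightarrow> p (c z) = p z"
    using self_lift_exists[OF cov hp v u uv(2)[symmetric]] by blast
  have contb: "continuous_on (ball 0 1) b" and contc: "continuous_on (ball 0 1) c"
    using b(1) c(1) holomorphic_on_imp_continuous_on by blast+
  have "continuous_on (ball 0 1) (\<lambda>z. c (b z))"
    using continuous_on_compose2[OF contc contb] b(2) by (auto simp: image_subset_iff)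
  moreover have "cmod (c (b z)) < 1" "p (c (b z)) = p z" if "cmod z < 1" for z
    using b(2,4) c(2,4) that by auto
  ultimately have cb: "c (b z) = z" if "cmod z < 1" for z
    using covering_self_lift_unique[OF cov, of "\<lambda>z. c (b z)" "\<lambda>z. z" u z] b(3) c(3) u that
    by (simp add: continuous_on_id)
  obtain P where P: "mat_det P > 0" "\<And>z. cmod z < 1 \<Longrightarrow> b z = moeb P z"
    using disc_automorphism_is_moeb[OF b(1,2) c(1,2) cb] by blast
  show ?thesis
  proof (rule that)
    show "moeb_deck p P"
      using b(4) P by (simp add: moeb_deck_def)
    have "moeb P w \<noteq> w" if w: "cmod w < 1" for w
    proof
      assume "moeb P w = w"
      then have "b u = u"
        using covering_self_lift_unique[OF cov contb b(2,4), of "\<lambda>z. z" w u] P(2)[OF w] w u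
        by (simp add: continuous_on_id)
      then show False
        using b(3) uv(1) by simp
    qed
    then show "fixed_point_free P"
      using P(1) by (simp add: fixed_point_free_def)
  qed
qed

section \<open>A quantitative Schwarz lemma\<close>

lemma dist_le_of_pseudo_dist_le:
  assumes c: "cmod c < 1" and q: "cmod q < 1" and r: "0 \<le> r" "r < 1" and pd: "pseudo_dist q c \<le> r"
  shows "cmod (q - c) \<le> (1 - (cmod c)^2) / (1 - r)"
proof -
  have dq: "1 - cnj c * q \<noteq> 0"
    using norm_mult_less[of "cnj c" 1 q 1] c q by auto
  have "cmod (q - c) = pseudo_dist q c * cmod (1 - cnj c * q)"
    using dq by (simp add: pseudo_dist_def moeb_adj_transl_eq norm_divide)
  also have "\<dots> \<le> r * ((1 - (cmod c)^2) + cmod c * cmod (q - c))"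
  proof (rule mult_mono[OF pd _ r(1) norm_ge_zero])
    have "1 - cnj c * q = (1 - cnj c * c) - cnj c * (q - c)"
      by (simp add: algebra_simps)
    also have "1 - cnj c * c = of_real (1 - (cmod c)^2)"
      using complex_norm_square[of c] by (simp add: mult.commute)
    finally have "cmod (1 - cnj c * q) \<le> cmod (complex_of_real (1 - (cmod c)^2)) + cmod (cnj c * (q - c))"
      by (metis norm_triangle_ineq4)
    moreover have "cmod (complex_of_real (1 - (cmod c)^2)) = 1 - (cmod c)^2"
      unfolding norm_of_real using c by (simp add: abs_square_less_1 less_imp_le)
    ultimately show "cmod (1 - cnj c * q) \<le> (1 - (cmod c)^2) + cmod c * cmod (q - c)"
      by (simp add: norm_mult)
  qed
  finally have "cmod (q - c) * (1 - r * cmod c) \<le> r * (1 - (cmod c)^2)"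
    by (simp add: algebra_simps)
  moreover have "cmod (q - c) * (1 - r) \<le> cmod (q - c) * (1 - r * cmod c)"
    using c r by (intro mult_left_mono) (auto simp: mult_left_le)
  moreover have "r * (1 - (cmod c)^2) \<le> 1 - (cmod c)^2"
    using r c by (simp add: mult_left_le_one_le abs_square_le_1)
  ultimately show ?thesis
    using r by (simp add: field_simps)
qed

lemma deriv_linear_on_disc:
  assumes "\<And>z. cmod z < 1 \<Longrightarrow> g z = \<alpha> * z"
  shows "deriv g 0 = \<alpha>"
proof -
  have "((\<lambda>z. \<alpha> * z) has_field_derivative \<alpha>) (at 0)"
    by (auto intro!: derivative_eq_intros)
  then have "(g has_field_derivative \<alpha>) (at 0)"
    by (rule has_field_derivative_transform_within_open[of _ _ _ "ball 0 1"]) (use assms in auto)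
  then show ?thesis
    by (rule DERIV_imp_deriv)
qed

lemma Schwarz_quotient_in_disc:
  assumes hg: "g holomorphic_on ball 0 1" and gn: "\<And>z. cmod z < 1 \<Longrightarrow> cmod (g z) < 1" and g0: "g 0 = 0"
    and c1: "cmod (deriv g 0) < 1" and ne: "\<And>z. cmod z < 1 \<Longrightarrow> z \<noteq> 0 \<Longrightarrow> cmod (g z) \<noteq> cmod z"
  obtains h where "h holomorphic_on ball 0 1" "\<And>z. cmod z < 1 \<Longrightarrow> g z = z * h z" "h 0 = deriv g 0"
    "\<And>z. cmod z < 1 \<Longrightarrow> cmod (h z) < 1"
proof -
  obtain h where hh: "h holomorphic_on ball 0 1" and gh: "\<And>z. cmod z < 1 \<Longrightarrow> g z = z * h z"
    and h0: "deriv g 0 = h 0"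
    using Schwarz3[OF hg g0] by metis
  have "cmod (h z) < 1" if "cmod z < 1" for z
  proof (cases "z = 0")
    case True
    then show ?thesis
      using c1 h0 by simp
  next
    case False
    have "cmod (g z) < cmod z"
      using Schwarz_Lemma(1)[OF hg g0 gn that] ne[OF that False] by simp
    then have "cmod z * cmod (h z) < cmod z"
      using gh[OF that] by (simp add: norm_mult)
    then show ?thesis
      using False by simp
  qed
  then show ?thesis
    using that hh gh h0 by simp
qed

text \<open>A self-map \<open>g\<close> of the disc fixing 0 is close to its linear part \<open>g'(0) z\<close> on a smaller disc
  when \<open>|g'(0)|\<close> is close to 1: apply the previous lemma to \<open>g(z)/z\<close>, which by the Schwarz lemma
  lies within pseudo-distance \<open>|z|\<close> of \<open>g'(0)\<close>.\<close>

lemma Schwarz_linear_approx: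
  assumes hg: "g holomorphic_on ball 0 1" and gn: "\<And>z. cmod z < 1 \<Longrightarrow> cmod (g z) < 1" and g0: "g 0 = 0"
    and r: "0 \<le> r" "r < 1" and z: "cmod \<zeta> \<le> r"
  shows "cmod (g \<zeta> - deriv g 0 * \<zeta>) \<le> (1 - (cmod (deriv g 0))^2) / (1 - r)"
proof -
  define c where "c = deriv g 0"
  have z1: "cmod \<zeta> < 1"
    using z r by simp
  show ?thesis
  proof (cases "(\<exists>z. cmod z < 1 \<and> z \<noteq> 0 \<and> cmod (g z) = cmod z) \<or> cmod c = 1")
    case True
    then obtain \<alpha> where \<alpha>: "\<And>z. cmod z < 1 \<Longrightarrow> g z = \<alpha> * z" "cmod \<alpha> = 1"
      using Schwarz_Lemma(3)[OF hg g0 gn z1] by (auto simp: c_def)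
    then have "c = \<alpha>"
      unfolding c_def using deriv_linear_on_disc[OF \<alpha>(1)] by simp
    then show ?thesis
      using \<alpha> z1 r by (simp add: c_def)
  next
    case False
    then have c1: "cmod c < 1"
      using Schwarz_Lemma(2)[OF hg g0 gn z1] by (auto simp: c_def)
    obtain h where hh: "h holomorphic_on ball 0 1" and gh: "\<And>z. cmod z < 1 \<Longrightarrow> g z = z * h z"
      and h0: "h 0 = c" and hn: "\<And>z. cmod z < 1 \<Longrightarrow> cmod (h z) < 1"
      by (rule Schwarz_quotient_in_disc[OF hg gn g0]) (use False c1 in \<open>auto simp: c_def\<close>)
    have Tc: "mat_det (mat_adj (mat_transl c)) > 0"
      using mat_det_transl_pos[OF c1] by simp
    define \<phi> where "\<phi> z = moeb (mat_adj (mat_transl c)) (h z)" for z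
    have "\<phi> holomorphic_on ball 0 1"
      unfolding \<phi>_def by (rule holomorphic_on_compose_disc[OF holomorphic_on_moeb[OF Tc] hh hn])
    moreover have "\<phi> 0 = 0"
      by (simp add: \<phi>_def h0 moeb_adj_transl)
    moreover have "cmod (\<phi> z) < 1" if "cmod z < 1" for z
      using moeb_in_disc[OF Tc hn[OF that]] by (simp add: \<phi>_def)
    ultimately have "pseudo_dist (h \<zeta>) c \<le> r"
      using Schwarz_Lemma(1)[of \<phi> \<zeta>] z z1 by (simp add: \<phi>_def pseudo_dist_def)
    then have "cmod (h \<zeta> - c) \<le> (1 - (cmod c)^2) / (1 - r)"
      by (rule dist_le_of_pseudo_dist_le[OF c1 hn[OF z1] r])
    moreover have "cmod (g \<zeta> - c * \<zeta>) = cmod \<zeta> * cmod (h \<zeta> - c)"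
      using gh[OF z1] by (simp add: algebra_simps norm_mult flip: norm_mult)
    moreover have "cmod \<zeta> * cmod (h \<zeta> - c) \<le> cmod (h \<zeta> - c)"
      using z1 by (simp add: mult_left_le_one_le)
    ultimately show ?thesis
      by (simp add: c_def)
  qed
qed

section \<open>Persistence of a transversal double point\<close>

text \<open>Newton's change of variables \<open>w \<mapsto> w - L\<^sup>-\<^sup>1 (F w)\<close> maps a ball around \<open>x0\<close> into itself
  when \<open>F\<close> is uniformly close to the affine map \<open>w \<mapsto> L (w - x0)\<close>; Brouwer's theorem then yields
  a zero of \<open>F\<close>.\<close>

lemma brouwer_zero_near_linear:
  fixes F :: "'a::euclidean_space \<Rightarrow> 'a"
  assumes Li: "bounded_linear Li" "\<And>v. L (Li v) = v" "\<And>h. Li (L h) = h"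
    and K: "\<And>v. norm (Li v) \<le> norm v * K" and \<rho>: "\<rho> > 0"
    and cF: "continuous_on (cball x0 \<rho>) F"
    and near: "\<And>w. w \<in> cball x0 \<rho> \<Longrightarrow> norm (F w - L (w - x0)) * K \<le> \<rho>"
  obtains w where "w \<in> cball x0 \<rho>" "F w = 0"
proof -
  interpret Li: bounded_linear Li by (rule Li(1))
  define \<Phi> where "\<Phi> w = w - Li (F w)" for w
  have "continuous_on (cball x0 \<rho>) (\<lambda>w. Li (F w))"
    by (rule continuous_on_compose2[OF linear_continuous_on[OF Li(1)] cF subset_UNIV])
  then have "continuous_on (cball x0 \<rho>) \<Phi>"
    unfolding \<Phi>_def by (intro continuous_on_diff continuous_on_id)
  moreover have "\<Phi> w \<in> cball x0 \<rho>" if w: "w \<in> cball x0 \<rho>" for w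
  proof -
    have "\<Phi> w - x0 = - Li (F w - L (w - x0))"
      by (simp add: \<Phi>_def Li(3) Li.diff)
    then have "norm (\<Phi> w - x0) \<le> \<rho>"
      using K[of "F w - L (w - x0)"] near[OF w] by simp
    then show ?thesis
      by (simp add: dist_norm norm_minus_commute)
  qed
  ultimately obtain w where w: "w \<in> cball x0 \<rho>" "\<Phi> w = w"
    using brouwer_ball[OF \<rho>] by blast
  then have "Li (F w) = 0"
    by (simp add: \<Phi>_def)
  then have "F w = L 0"
    using Li(2)[of "F w"] by simp
  also have "L 0 = 0"
    using Li(2)[of 0] by simp
  finally show ?thesis
    using that w(1) by blast
qed

lemma nondegenerate_zero_persists:
  fixes F0 :: "'a::euclidean_space \<Rightarrow> 'a"
  assumes der: "(F0 has_derivative L) (at x0)" and F00: "F0 x0 = 0"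
    and Li: "bounded_linear Li" "\<And>v. L (Li v) = v" "\<And>h. Li (L h) = h"
  obtains \<rho>0 where "\<rho>0 > 0"
    "\<And>\<rho>. 0 < \<rho> \<Longrightarrow> \<rho> \<le> \<rho>0 \<Longrightarrow> \<exists>\<eta>>0. \<forall>F. continuous_on (cball x0 \<rho>) F \<longrightarrow>
        (\<forall>w\<in>cball x0 \<rho>. norm (F w - F0 w) \<le> \<eta>) \<longrightarrow> (\<exists>w\<in>cball x0 \<rho>. F w = 0)"
proof -
  obtain K where K: "K > 0" "\<And>v. norm (Li v) \<le> norm v * K"
    using bounded_linear.pos_bounded[OF Li(1)] by blast
  have "1 / (2 * K) > 0"
    using K(1) by simp
  then obtain \<delta> where \<delta>: "\<delta> > 0"
    "\<And>y. norm (y - x0) < \<delta> \<Longrightarrow> norm (F0 y - F0 x0 - L (y - x0)) \<le> 1 / (2 * K) * norm (y - x0)"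
    using der[unfolded has_derivative_at_alt] by blast
  show ?thesis
  proof (rule that[of "\<delta> / 2"])
    fix \<rho> :: real
    assume \<rho>: "0 < \<rho>" "\<rho> \<le> \<delta> / 2"
    have "\<exists>w\<in>cball x0 \<rho>. F w = 0"
      if cF: "continuous_on (cball x0 \<rho>) F" and cl: "\<forall>w\<in>cball x0 \<rho>. norm (F w - F0 w) \<le> \<rho> / (2 * K)" for F
    proof (rule brouwer_zero_near_linear[OF Li K(2) \<rho>(1) cF])
      fix w
      assume w: "w \<in> cball x0 \<rho>"
      then have nw: "norm (w - x0) \<le> \<rho>"
        by (simp add: dist_norm norm_minus_commute)
      have "norm (F0 w - L (w - x0)) \<le> 1 / (2 * K) * norm (w - x0)"
        using \<delta>(2)[of w] nw \<rho> F00 by simp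
      also have "\<dots> \<le> \<rho> / (2 * K)"
        using nw K(1) by (simp add: divide_right_mono)
      finally have "norm (F0 w - L (w - x0)) \<le> \<rho> / (2 * K)" .
      moreover have "norm (F w - F0 w) \<le> \<rho> / (2 * K)"
        using cl w by blast
      ultimately have "norm (F w - L (w - x0)) \<le> \<rho> / (2 * K) + \<rho> / (2 * K)"
        using norm_triangle_ineq[of "F w - F0 w" "F0 w - L (w - x0)"] by simp
      then show "norm (F w - L (w - x0)) * K \<le> \<rho>"
        using K(1) by (simp add: field_simps)
    qed blast
    moreover have "\<rho> / (2 * K) > 0"
      using \<rho> K by simp
    ultimately show "\<exists>\<eta>>0. \<forall>F. continuous_on (cball x0 \<rho>) F \<longrightarrow>
        (\<forall>w\<in>cball x0 \<rho>. norm (F w - F0 w) \<le> \<eta>) \<longrightarrow> (\<exists>w\<in>cball x0 \<rho>. F w = 0)"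
      by blast
  qed (use \<delta>(1) in simp)
qed

text \<open>Zeros of \<open>double_point_map q1 q2\<close> off the diagonal are the double points of \<open>(q1, q2)\<close>.\<close>

definition double_point_map ::
  "(complex \<Rightarrow> complex) \<Rightarrow> (complex \<Rightarrow> complex) \<Rightarrow> complex \<times> complex \<Rightarrow> complex \<times> complex" where
  "double_point_map q1 q2 w = (q1 (snd w) - q1 (fst w), q2 (snd w) - q2 (fst w))"

lemma has_derivative_double_point_map:
  assumes hq1: "q1 holomorphic_on ball 0 1" and hq2: "q2 holomorphic_on ball 0 1"
    and x: "cmod x < 1" and y: "cmod y < 1"
  shows "(double_point_map q1 q2 has_derivative
      (\<lambda>h. (deriv q1 y * snd h - deriv q1 x * fst h, deriv q2 y * snd h - deriv q2 x * fst h))) (at (x, y))"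
proof -
  have "((\<lambda>w. q (snd w)) has_derivative (\<lambda>h. deriv q y * snd h)) (at (x, y))"
    and "((\<lambda>w. q (fst w)) has_derivative (\<lambda>h. deriv q x * fst h)) (at (x, y))"
    if "q holomorphic_on ball 0 1" for q
  proof -
    have "(q has_derivative (*) (deriv q y)) (at (snd (x, y)))"
      "(q has_derivative (*) (deriv q x)) (at (fst (x, y)))"
      using has_field_derivative_imp_has_derivative[OF holomorphic_on_disc_DERIV[OF that y]]
        has_field_derivative_imp_has_derivative[OF holomorphic_on_disc_DERIV[OF that x]] by simp_all
    then show "((\<lambda>w. q (snd w)) has_derivative (\<lambda>h. deriv q y * snd h)) (at (x, y))"
      "((\<lambda>w. q (fst w)) has_derivative (\<lambda>h. deriv q x * fst h)) (at (x, y))"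
      using has_derivative_compose[OF has_derivative_snd[OF has_derivative_ident]]
        has_derivative_compose[OF has_derivative_fst[OF has_derivative_ident]] by auto
  qed
  then show ?thesis
    unfolding double_point_map_def using hq1 hq2 by (intro has_derivative_Pair has_derivative_diff) auto
qed

lemma inverse_of_2x2_complex:
  fixes a c d e :: complex
  assumes D0: "a * e - c * d \<noteq> 0"
  obtains Li where "bounded_linear Li"
    "\<forall>v. (a * snd (Li v) - c * fst (Li v), d * snd (Li v) - e * fst (Li v)) = v"
    "\<forall>h. Li (a * snd h - c * fst h, d * snd h - e * fst h) = h"
proof (intro that allI)
  define \<Delta> where "\<Delta> = a * e - c * d"
  show "bounded_linear (\<lambda>v. ((d * fst v - a * snd v) / \<Delta>, (e * fst v - c * snd v) / \<Delta>))"
    by (intro bounded_linear_intros bounded_linear_compose[OF bounded_linear_divide])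
  fix v h :: "complex \<times> complex"
  have "a * (e * fst v - c * snd v) - c * (d * fst v - a * snd v) = fst v * \<Delta>"
    "d * (e * fst v - c * snd v) - e * (d * fst v - a * snd v) = snd v * \<Delta>"
    by (simp_all add: \<Delta>_def algebra_simps)
  moreover have "a * (X / \<Delta>) - c * (Y / \<Delta>) = (a * X - c * Y) / \<Delta>"
    "d * (X / \<Delta>) - e * (Y / \<Delta>) = (d * X - e * Y) / \<Delta>" for X Y
    by (simp_all add: diff_divide_distrib)
  ultimately show "(a * snd ((d * fst v - a * snd v) / \<Delta>, (e * fst v - c * snd v) / \<Delta>)
      - c * fst ((d * fst v - a * snd v) / \<Delta>, (e * fst v - c * snd v) / \<Delta>),
      d * snd ((d * fst v - a * snd v) / \<Delta>, (e * fst v - c * snd v) / \<Delta>)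
      - e * fst ((d * fst v - a * snd v) / \<Delta>, (e * fst v - c * snd v) / \<Delta>)) = v"
    using D0 unfolding fst_conv snd_conv \<Delta>_def by (simp add: prod_eq_iff)
  have "d * (a * snd h - c * fst h) - a * (d * snd h - e * fst h) = fst h * \<Delta>"
    "e * (a * snd h - c * fst h) - c * (d * snd h - e * fst h) = snd h * \<Delta>"
    by (simp_all add: \<Delta>_def algebra_simps)
  then show "((d * fst (a * snd h - c * fst h, d * snd h - e * fst h)
      - a * snd (a * snd h - c * fst h, d * snd h - e * fst h)) / \<Delta>,
      (e * fst (a * snd h - c * fst h, d * snd h - e * fst h)
      - c * snd (a * snd h - c * fst h, d * snd h - e * fst h)) / \<Delta>) = h"
    using D0 by (simp add: \<Delta>_def prod_eq_iff)
qed

lemma double_point_stable: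
  assumes hq1: "q1 holomorphic_on ball 0 1" and hq2: "q2 holomorphic_on ball 0 1"
    and b: "cmod b < 1" "b \<noteq> 0" and dp: "q1 b = q1 0" "q2 b = q2 0"
    and tr: "deriv q1 0 * deriv q2 b \<noteq> deriv q1 b * deriv q2 0"
  obtains \<rho> \<eta> where "\<rho> > 0" "\<eta> > 0" "\<rho> \<le> (1 - cmod b) / 4" "\<rho> \<le> cmod b / 4"
    "\<And>F. continuous_on (cball (0, b) \<rho>) F \<Longrightarrow> (\<forall>w\<in>cball (0, b) \<rho>. norm (F w - double_point_map q1 q2 w) \<le> \<eta>)
      \<Longrightarrow> \<exists>w\<in>cball (0, b) \<rho>. F w = 0"
proof -
  have "deriv q1 b * deriv q2 0 - deriv q1 0 * deriv q2 b \<noteq> 0"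
    using tr by simp
  then obtain Li where Li: "bounded_linear Li"
    "\<forall>v. (deriv q1 b * snd (Li v) - deriv q1 0 * fst (Li v), deriv q2 b * snd (Li v) - deriv q2 0 * fst (Li v)) = v"
    "\<forall>h. Li (deriv q1 b * snd h - deriv q1 0 * fst h, deriv q2 b * snd h - deriv q2 0 * fst h) = h"
    by (rule inverse_of_2x2_complex)
  have der: "(double_point_map q1 q2 has_derivative (\<lambda>h. (deriv q1 b * snd h - deriv q1 0 * fst h,
      deriv q2 b * snd h - deriv q2 0 * fst h))) (at (0, b))"
    using has_derivative_double_point_map[OF hq1 hq2 _ b(1), of 0] by simp
  have "double_point_map q1 q2 (0, b) = 0"
    using dp by (simp add: double_point_map_def zero_prod_def)
  then obtain \<rho>0 where \<rho>0: "\<rho>0 > 0"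
    "\<And>\<rho>. 0 < \<rho> \<Longrightarrow> \<rho> \<le> \<rho>0 \<Longrightarrow> \<exists>\<eta>>0. \<forall>F. continuous_on (cball (0, b) \<rho>) F \<longrightarrow>
        (\<forall>w\<in>cball (0, b) \<rho>. norm (F w - double_point_map q1 q2 w) \<le> \<eta>) \<longrightarrow> (\<exists>w\<in>cball (0, b) \<rho>. F w = 0)"
    using nondegenerate_zero_persists[OF der _ Li(1) Li(2,3)[rule_format]] by blast
  define \<rho> where "\<rho> = min \<rho>0 (min ((1 - cmod b) / 4) (cmod b / 4))"
  have \<rho>: "\<rho> > 0" "\<rho> \<le> \<rho>0" "\<rho> \<le> (1 - cmod b) / 4" "\<rho> \<le> cmod b / 4"
    using \<rho>0(1) b by (simp_all add: \<rho>_def min_def)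
  then show ?thesis
    using \<rho>0(2)[OF \<rho>(1,2)] that[OF \<rho>(1)] by blast
qed

lemma cball_pair_bounds:
  assumes "w \<in> cball (0::complex, b) \<rho>"
  shows "cmod (fst w) \<le> \<rho>" "cmod (snd w - b) \<le> \<rho>"
proof -
  have n: "norm ((0, b) - w) \<le> \<rho>"
    using assms by (simp add: dist_norm)
  have "cmod (fst ((0, b) - w)) \<le> norm ((0, b) - w)" "cmod (snd ((0, b) - w)) \<le> norm ((0, b) - w)"
    by (metis norm_fst_le prod.collapse, metis norm_snd_le prod.collapse)
  then show "cmod (fst w) \<le> \<rho>" "cmod (snd w - b) \<le> \<rho>"
    using n by (simp_all add: norm_minus_commute)
qed

lemma continuous_on_double_point_map:
  assumes "continuous_on S k1" "continuous_on S k2" "fst ` A \<subseteq> S" "snd ` A \<subseteq> S"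
  shows "continuous_on A (double_point_map k1 k2)"
proof -
  have "continuous_on A (\<lambda>w. k (fst w))" "continuous_on A (\<lambda>w. k (snd w))"
    if "continuous_on S k" for k
    using continuous_on_compose2[OF that continuous_on_fst[OF continuous_on_id] assms(3)]
      continuous_on_compose2[OF that continuous_on_snd[OF continuous_on_id] assms(4)] by auto
  then show ?thesis
    unfolding double_point_map_def using assms(1,2) by (intro continuous_on_Pair continuous_on_diff)
qed

lemma norm_double_point_map_diff_le:
  assumes "\<And>z. z \<in> {fst w, snd w} \<Longrightarrow> cmod (k1 z - q1 z) \<le> e"
    and "\<And>z. z \<in> {fst w, snd w} \<Longrightarrow> cmod (k2 z - q2 z) \<le> e"
  shows "norm (double_point_map k1 k2 w - double_point_map q1 q2 w) \<le> 4 * e"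
proof -
  have "cmod ((k (snd w) - q (snd w)) - (k (fst w) - q (fst w))) \<le> e + e"
    if "\<And>z. z \<in> {fst w, snd w} \<Longrightarrow> cmod (k z - q z) \<le> e" for k q
    using norm_triangle_ineq4[of "k (snd w) - q (snd w)" "k (fst w) - q (fst w)"]
      that[of "fst w"] that[of "snd w"] by simp
  from this[of k1 q1, OF assms(1)] this[of k2 q2, OF assms(2)]
  have "cmod ((k1 (snd w) - q1 (snd w)) - (k1 (fst w) - q1 (fst w)))
      + cmod ((k2 (snd w) - q2 (snd w)) - (k2 (fst w) - q2 (fst w))) \<le> 4 * e"
    by simp
  moreover have "norm (double_point_map k1 k2 w - double_point_map q1 q2 w)
      \<le> cmod ((k1 (snd w) - q1 (snd w)) - (k1 (fst w) - q1 (fst w)))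
        + cmod ((k2 (snd w) - q2 (snd w)) - (k2 (fst w) - q2 (fst w)))"
    using norm_Pair_le by (simp add: double_point_map_def algebra_simps)
  ultimately show ?thesis
    by linarith
qed

lemma double_point_of_uniform_approx:
  assumes b: "cmod b < 1" "b \<noteq> 0"
    and \<rho>: "\<rho> \<le> (1 - cmod b) / 4" "\<rho> \<le> cmod b / 4"
    and stable: "\<And>F. continuous_on (cball (0, b) \<rho>) F \<Longrightarrow>
      (\<forall>w\<in>cball (0, b) \<rho>. norm (F w - double_point_map q1 q2 w) \<le> \<eta>) \<Longrightarrow> \<exists>w\<in>cball (0, b) \<rho>. F w = 0"
    and k: "continuous_on (cball 0 ((1 + cmod b) / 2)) k1" "continuous_on (cball 0 ((1 + cmod b) / 2)) k2"
    and close: "\<And>z. cmod z \<le> (1 + cmod b) / 2 \<Longrightarrow> cmod (k1 z - q1 z) \<le> \<eta> / 4"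
      "\<And>z. cmod z \<le> (1 + cmod b) / 2 \<Longrightarrow> cmod (k2 z - q2 z) \<le> \<eta> / 4"
  obtains \<zeta> \<zeta>' where "cmod \<zeta> \<le> (1 + cmod b) / 2" "cmod \<zeta>' \<le> (1 + cmod b) / 2" "\<zeta> \<noteq> \<zeta>'"
    "k1 \<zeta> = k1 \<zeta>'" "k2 \<zeta> = k2 \<zeta>'"
proof -
  define r where "r = (1 + cmod b) / 2"
  have inr: "fst w \<in> cball 0 r" "snd w \<in> cball 0 r" if "w \<in> cball (0::complex, b) \<rho>" for w
  proof -
    have "cmod (fst w) \<le> \<rho>" "cmod (snd w) \<le> cmod b + \<rho>"
      using cball_pair_bounds[OF that] norm_triangle_sub[of "snd w" b] by auto
    moreover have "\<rho> \<le> (1 + cmod b) / 2"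
      using \<rho> norm_ge_zero[of b] by argo
    moreover have "cmod b + \<rho> \<le> (1 + cmod b) / 2"
      using \<rho> b by argo
    ultimately show "fst w \<in> cball 0 r" "snd w \<in> cball 0 r"
      by (auto simp: r_def)
  qed
  have "continuous_on (cball (0, b) \<rho>) (double_point_map k1 k2)"
    by (rule continuous_on_double_point_map[OF k[folded r_def]]) (use inr in blast)+
  moreover have "norm (double_point_map k1 k2 w - double_point_map q1 q2 w) \<le> \<eta>"
    if "w \<in> cball (0, b) \<rho>" for w
    using norm_double_point_map_diff_le[of w k1 q1 "\<eta> / 4" k2 q2] close inr[OF that] by (auto simp: r_def)
  ultimately obtain w where w: "w \<in> cball (0, b) \<rho>" "double_point_map k1 k2 w = 0"
    using stable by blast
  have "fst w \<noteq> snd w"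
  proof
    assume "fst w = snd w"
    then have "cmod b \<le> cmod (fst w) + cmod (snd w - b)"
      using norm_triangle_sub[of b "fst w"] by (simp add: norm_minus_commute)
    moreover have "cmod b > 0"
      using b(2) by simp
    ultimately show False
      using cball_pair_bounds[OF w(1)] \<rho> by argo
  qed
  then show ?thesis
    using that[of "fst w" "snd w"] inr[OF w(1)] w(2) by (simp add: double_point_map_def r_def zero_prod_def)
qed

lemma uniformly_continuous_on_cball_disc:
  assumes hq: "q holomorphic_on ball 0 1" and r: "r < 1" and e: "e > 0"
  obtains \<delta> where "\<delta> > 0"
    "\<And>x y. cmod x \<le> r \<Longrightarrow> cmod y \<le> r \<Longrightarrow> cmod (x - y) < \<delta> \<Longrightarrow> cmod (q x - q y) < e"
proof -
  have "cball 0 r \<subseteq> ball (0::complex) 1"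
    using r by auto
  then have "uniformly_continuous_on (cball 0 r) q"
    using holomorphic_on_imp_continuous_on[OF holomorphic_on_subset[OF hq]]
    by (intro compact_uniformly_continuous) simp_all
  then obtain \<delta> where "\<delta> > 0"
      "\<And>x y. x \<in> cball 0 r \<Longrightarrow> y \<in> cball 0 r \<Longrightarrow> dist y x < \<delta> \<Longrightarrow> dist (q y) (q x) < e"
    using e unfolding uniformly_continuous_on_def by metis
  then show ?thesis
    using that[of \<delta>] by (simp add: dist_norm)
qed

lemma Schwarz_rotated_near_id:
  assumes hg: "g holomorphic_on ball 0 1" and gn: "\<And>z. cmod z < 1 \<Longrightarrow> cmod (g z) < 1" and g0: "g 0 = 0"
    and c0: "deriv g 0 \<noteq> 0" and r: "0 \<le> r" "r < 1" and z: "cmod \<zeta> \<le> r"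
  shows "cmod (g (cnj (deriv g 0) / cmod (deriv g 0) * \<zeta>) - \<zeta>) \<le> 3 * (1 - cmod (deriv g 0)) / (1 - r)"
proof -
  define c where "c = deriv g 0"
  define \<nu> where "\<nu> = cnj c / cmod c"
  have c1: "cmod c \<le> 1"
    using Schwarz_Lemma(2)[OF hg g0 gn, of 0] by (simp add: c_def)
  have "cmod \<nu> = 1"
    using c0 by (simp add: \<nu>_def c_def norm_divide)
  then have nz: "cmod (\<nu> * \<zeta>) \<le> r"
    using z by (simp add: norm_mult)
  have "c * \<nu> = of_real (cmod c)"
    using c0 complex_norm_square[of c] by (simp add: \<nu>_def c_def power2_eq_square field_simps)
  then have "c * (\<nu> * \<zeta>) - \<zeta> = - (of_real (1 - cmod c) * \<zeta>)"
    by (simp add: algebra_simps)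
  then have "cmod (c * (\<nu> * \<zeta>) - \<zeta>) = \<bar>1 - cmod c\<bar> * cmod \<zeta>"
    by (simp only: norm_minus_cancel norm_mult norm_of_real)
  then have "cmod (c * (\<nu> * \<zeta>) - \<zeta>) = (1 - cmod c) * cmod \<zeta>"
    using c1 by simp
  also have "\<dots> \<le> (1 - cmod c) * 1"
    using z r c1 by (intro mult_left_mono) auto
  also have "\<dots> \<le> (1 - cmod c) / (1 - r)"
    using r c1 by (simp add: le_divide_eq mult_left_le)
  finally have lin: "cmod (c * (\<nu> * \<zeta>) - \<zeta>) \<le> (1 - cmod c) / (1 - r)" .
  have "cmod (g (\<nu> * \<zeta>) - c * (\<nu> * \<zeta>)) \<le> (1 - (cmod c)^2) / (1 - r)"
    using Schwarz_linear_approx[OF hg gn g0 r nz] by (simp add: c_def)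
  also have "\<dots> \<le> 2 * (1 - cmod c) / (1 - r)"
  proof (rule divide_right_mono)
    show "1 - (cmod c)^2 \<le> 2 * (1 - cmod c)"
      using zero_le_power2[of "1 - cmod c"] by (simp add: power2_eq_square algebra_simps)
  qed (use r in simp)
  finally have "cmod (g (\<nu> * \<zeta>) - \<zeta>) \<le> 2 * (1 - cmod c) / (1 - r) + (1 - cmod c) / (1 - r)"
    using lin norm_triangle_ineq[of "g (\<nu> * \<zeta>) - c * (\<nu> * \<zeta>)" "c * (\<nu> * \<zeta>) - \<zeta>"] by simp
  then show ?thesis
    by (simp add: \<nu>_def c_def add_divide_distrib[symmetric])
qed

lemma rotated_composition_close:
  assumes hq: "q holomorphic_on ball 0 1" and r: "0 \<le> r" "r < 1"
    and \<delta>: "\<And>x y. cmod x \<le> r \<Longrightarrow> cmod y \<le> r \<Longrightarrow> cmod (x - y) < \<delta> \<Longrightarrow> cmod (q x - q y) < e"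
    and g: "g holomorphic_on ball 0 1" "\<And>z. cmod z < 1 \<Longrightarrow> cmod (g z) < 1" "g 0 = 0"
    and c: "deriv g 0 \<noteq> 0" "3 * (1 - cmod (deriv g 0)) / (1 - r) < \<delta>"
  defines "\<nu> \<equiv> cnj (deriv g 0) / cmod (deriv g 0)"
  shows "continuous_on (cball 0 r) (\<lambda>z. q (g (\<nu> * z)))"
    and "\<And>z. cmod z \<le> r \<Longrightarrow> cmod (q (g (\<nu> * z)) - q z) < e"
proof -
  have \<nu>: "cmod \<nu> = 1"
    using c(1) by (simp add: \<nu>_def norm_divide)
  have "continuous_on (ball 0 1) (\<lambda>z. q (g z))"
    by (rule holomorphic_on_imp_continuous_on[OF holomorphic_on_compose_disc[OF hq g(1,2)]])
  moreover have "(\<lambda>z. \<nu> * z) ` cball 0 r \<subseteq> ball 0 1"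
    using \<nu> r by (auto simp: norm_mult)
  ultimately show "continuous_on (cball 0 r) (\<lambda>z. q (g (\<nu> * z)))"
    by (rule continuous_on_compose2[OF _ continuous_on_mult_left[OF continuous_on_id]])
  fix z
  assume z: "cmod z \<le> r"
  have "cmod (g (\<nu> * z)) \<le> r"
    using Schwarz_Lemma(1)[OF g(1,3,2), of "\<nu> * z"] z r \<nu> by (simp add: norm_mult)
  moreover have "cmod (g (\<nu> * z) - z) < \<delta>"
    using Schwarz_rotated_near_id[OF g c(1) r z] c(2) by (simp add: \<nu>_def)
  ultimately show "cmod (q (g (\<nu> * z)) - q z) < e"
    using \<delta> z by blast
qed

lemma nearly_rotations_double_point:
  assumes hq1: "q1 holomorphic_on ball 0 1" and hq2: "q2 holomorphic_on ball 0 1"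
    and b: "cmod b < 1" "b \<noteq> 0" and \<rho>: "\<rho> \<le> (1 - cmod b) / 4" "\<rho> \<le> cmod b / 4"
    and stable: "\<And>F. continuous_on (cball (0, b) \<rho>) F \<Longrightarrow>
      (\<forall>w\<in>cball (0, b) \<rho>. norm (F w - double_point_map q1 q2 w) \<le> \<eta>) \<Longrightarrow> \<exists>w\<in>cball (0, b) \<rho>. F w = 0"
    and r: "r = (1 + cmod b) / 2"
    and \<delta>1: "\<And>x y. cmod x \<le> r \<Longrightarrow> cmod y \<le> r \<Longrightarrow> cmod (x - y) < \<delta>1 \<Longrightarrow> cmod (q1 x - q1 y) < \<eta> / 4"
    and \<delta>2: "\<And>x y. cmod x \<le> r \<Longrightarrow> cmod y \<le> r \<Longrightarrow> cmod (x - y) < \<delta>2 \<Longrightarrow> cmod (q2 x - q2 y) < \<eta> / 4"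
    and g1: "g1 holomorphic_on ball 0 1" "\<And>z. cmod z < 1 \<Longrightarrow> cmod (g1 z) < 1" "g1 0 = 0"
    and g2: "g2 holomorphic_on ball 0 1" "\<And>z. cmod z < 1 \<Longrightarrow> cmod (g2 z) < 1" "g2 0 = 0"
    and c: "deriv g1 0 = deriv g2 0" "deriv g1 0 \<noteq> 0"
    and small: "3 * (1 - cmod (deriv g1 0)) / (1 - r) < \<delta>1" "3 * (1 - cmod (deriv g1 0)) / (1 - r) < \<delta>2"
  shows "\<not> inj_on (\<lambda>z. (q1 (g1 z), q2 (g2 z))) (ball 0 1)"
proof -
  define \<nu> where "\<nu> = cnj (deriv g1 0) / cmod (deriv g1 0)"
  have r1: "0 \<le> r" "r < 1"
    using b by (auto simp: r)
  note close1 = rotated_composition_close[OF hq1 r1 \<delta>1 g1 c(2) small(1), folded \<nu>_def]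
  have \<nu>2: "cnj (deriv g2 0) / cmod (deriv g2 0) = \<nu>"
    using c(1) by (simp add: \<nu>_def)
  note close2 = rotated_composition_close[OF hq2 r1 \<delta>2 g2 c(2)[unfolded c(1)] small(2)[unfolded c(1)],
      unfolded \<nu>2]
  obtain \<zeta> \<zeta>' where \<zeta>: "cmod \<zeta> \<le> r" "cmod \<zeta>' \<le> r" "\<zeta> \<noteq> \<zeta>'"
    "q1 (g1 (\<nu> * \<zeta>)) = q1 (g1 (\<nu> * \<zeta>'))" "q2 (g2 (\<nu> * \<zeta>)) = q2 (g2 (\<nu> * \<zeta>'))"
  proof (rule double_point_of_uniform_approx[of b \<rho> q1 q2 \<eta> "\<lambda>z. q1 (g1 (\<nu> * z))" "\<lambda>z. q2 (g2 (\<nu> * z))",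
        OF b \<rho> stable])
    show "cmod (q1 (g1 (\<nu> * z)) - q1 z) \<le> \<eta> / 4" "cmod (q2 (g2 (\<nu> * z)) - q2 z) \<le> \<eta> / 4"
      if "cmod z \<le> (1 + cmod b) / 2" for z
      using close1(2)[of z] close2(2)[of z] that by (simp_all add: r)
  qed (use close1(1) close2(1) in \<open>simp_all add: r\<close>)
  moreover have "cmod (\<nu> * \<zeta>) < 1" "cmod (\<nu> * \<zeta>') < 1" "\<nu> * \<zeta> \<noteq> \<nu> * \<zeta>'"
    using \<zeta>(1-3) c(2) r1 by (auto simp: \<nu>_def norm_mult norm_divide)
  ultimately show ?thesis
    using inj_onD[of "\<lambda>z. (q1 (g1 z), q2 (g2 z))" "ball 0 1" "\<nu> * \<zeta>" "\<nu> * \<zeta>'"] by auto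
qed

text \<open>Composing the transversal pair \<open>(q1, q2)\<close> with self-maps \<open>g1, g2\<close> of the disc fixing 0
  whose common derivative at 0 is almost unimodular cannot remove the double point: after a rotation
  both \<open>g\<^sub>j\<close> are uniformly close to the identity on a disc containing \<open>0\<close> and \<open>b\<close>.\<close>

lemma double_point_persists:
  assumes hq1: "q1 holomorphic_on ball 0 1" and hq2: "q2 holomorphic_on ball 0 1"
    and b: "cmod b < 1" "b \<noteq> 0" and dp: "q1 b = q1 0" "q2 b = q2 0"
    and tr: "deriv q1 0 * deriv q2 b \<noteq> deriv q1 b * deriv q2 0"
  obtains \<theta> where "0 < \<theta>" "\<theta> < 1"
    "\<And>g1 g2. g1 holomorphic_on ball 0 1 \<Longrightarrow> (\<And>z. cmod z < 1 \<Longrightarrow> cmod (g1 z) < 1) \<Longrightarrow> g1 0 = 0 \<Longrightarrow>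
      g2 holomorphic_on ball 0 1 \<Longrightarrow> (\<And>z. cmod z < 1 \<Longrightarrow> cmod (g2 z) < 1) \<Longrightarrow> g2 0 = 0 \<Longrightarrow>
      deriv g1 0 = deriv g2 0 \<Longrightarrow> 1 - \<theta> < cmod (deriv g1 0) \<Longrightarrow>
      \<not> inj_on (\<lambda>z. (q1 (g1 z), q2 (g2 z))) (ball 0 1)"
proof -
  obtain \<rho> \<eta> where \<rho>: "\<rho> > 0" "\<eta> > 0" "\<rho> \<le> (1 - cmod b) / 4" "\<rho> \<le> cmod b / 4"
    and stable: "\<And>F. continuous_on (cball (0, b) \<rho>) F \<Longrightarrow>
      (\<forall>w\<in>cball (0, b) \<rho>. norm (F w - double_point_map q1 q2 w) \<le> \<eta>) \<Longrightarrow> \<exists>w\<in>cball (0, b) \<rho>. F w = 0"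
    using double_point_stable[OF hq1 hq2 b dp tr] by blast
  define r where "r = (1 + cmod b) / 2"
  have r: "0 \<le> r" "r < 1"
    using b by (auto simp: r_def)
  obtain \<delta>1 where \<delta>1: "\<delta>1 > 0"
    "\<And>x y. cmod x \<le> r \<Longrightarrow> cmod y \<le> r \<Longrightarrow> cmod (x - y) < \<delta>1 \<Longrightarrow> cmod (q1 x - q1 y) < \<eta> / 4"
    using uniformly_continuous_on_cball_disc[OF hq1 r(2), of "\<eta> / 4"] \<rho>(2) by auto
  obtain \<delta>2 where \<delta>2: "\<delta>2 > 0"
    "\<And>x y. cmod x \<le> r \<Longrightarrow> cmod y \<le> r \<Longrightarrow> cmod (x - y) < \<delta>2 \<Longrightarrow> cmod (q2 x - q2 y) < \<eta> / 4"
    using uniformly_continuous_on_cball_disc[OF hq2 r(2), of "\<eta> / 4"] \<rho>(2) by auto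
  define \<theta> where "\<theta> = min (1/2) (min \<delta>1 \<delta>2 * (1 - r) / 4)"
  have \<theta>: "0 < \<theta>" "\<theta> \<le> 1/2"
    using \<delta>1(1) \<delta>2(1) r by (simp_all add: \<theta>_def)
  have "3 * \<theta> / (1 - r) \<le> 3 * (min \<delta>1 \<delta>2 * (1 - r) / 4) / (1 - r)"
    using r by (intro divide_right_mono mult_left_mono) (auto simp: \<theta>_def)
  also have "\<dots> = 3 / 4 * min \<delta>1 \<delta>2"
    using r by (simp add: field_simps)
  finally have \<theta>\<delta>: "3 * \<theta> / (1 - r) < \<delta>1" "3 * \<theta> / (1 - r) < \<delta>2"
    using \<delta>1(1) \<delta>2(1) by (simp_all add: min_def split: if_splits)
  show ?thesis
  proof (rule that[OF \<theta>(1)])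
    show "\<theta> < 1"
      using \<theta>(2) by simp
    fix g1 g2
    assume g: "g1 holomorphic_on ball 0 1" "\<And>z. cmod z < 1 \<Longrightarrow> cmod (g1 z) < 1" "g1 0 = 0"
      "g2 holomorphic_on ball 0 1" "\<And>z. cmod z < 1 \<Longrightarrow> cmod (g2 z) < 1" "g2 0 = 0"
      and c: "deriv g1 0 = deriv g2 0" "1 - \<theta> < cmod (deriv g1 0)"
    have "3 * (1 - cmod (deriv g1 0)) / (1 - r) < 3 * \<theta> / (1 - r)"
      using c(2) r by (intro divide_strict_right_mono) auto
    then show "\<not> inj_on (\<lambda>z. (q1 (g1 z), q2 (g2 z))) (ball 0 1)"
      using nearly_rotations_double_point[OF hq1 hq2 b \<rho>(3,4) stable r_def \<delta>1(2) \<delta>2(2) g c(1)] c(2) \<theta>(2) \<theta>\<delta>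
      by fastforce
  qed
qed

section \<open>A transversal double point of a pair of coverings\<close>

text \<open>With \<open>M \<circ> X\<close> and \<open>Y \<circ> M\<close> as in \<open>nonconjugate_first_order_mismatch\<close>, the points \<open>0\<close> and
  \<open>b = T\<^sup>-\<^sup>1 (X a)\<close> (where \<open>T 0 = a\<close>) have the same image under \<open>p1 \<circ> T\<close> and under \<open>p2 \<circ> M \<circ> T\<close>, and the
  derivative mismatch is exactly the transversality of this double point.\<close>

lemma double_point_of_mismatch:
  assumes X: "moeb_deck p1 X" and Y: "moeb_deck p2 Y" and M: "mat_det M > 0" and a: "cmod a < 1"
    and ne: "moeb X a \<noteq> a" and cm: "moeb M (moeb X a) = moeb Y (moeb M a)"
  defines "T \<equiv> mat_transl a" and "b \<equiv> moeb (mat_adj (mat_transl a)) (moeb X a)"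
  shows "mat_det T > 0" "mat_det (mat_mult M T) > 0" "cmod b < 1" "b \<noteq> 0" "moeb T b = moeb X a"
    "p1 (moeb T b) = p1 (moeb T 0)" "p2 (moeb (mat_mult M T) b) = p2 (moeb (mat_mult M T) 0)"
proof -
  have dX: "mat_det X > 0"
    using X by (simp add: moeb_deck_def)
  have a': "cmod (moeb X a) < 1"
    using moeb_in_disc[OF dX a] .
  show T: "mat_det T > 0"
    using mat_det_transl_pos[OF a] by (simp add: T_def)
  then show MT: "mat_det (mat_mult M T) > 0"
    using M by (simp add: mat_det_mult)
  have T0: "moeb T 0 = a"
    by (simp add: T_def moeb_transl_0)
  show b: "cmod b < 1"
    using moeb_in_disc[of "mat_adj T" "moeb X a"] T a' by (simp add: b_def T_def)
  show Tb: "moeb T b = moeb X a"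
    using moeb_moeb_adj[OF T a'] by (simp add: b_def T_def)
  show "b \<noteq> 0"
    using Tb T0 ne by auto
  show "p1 (moeb T b) = p1 (moeb T 0)"
    using Tb T0 X a by (simp add: moeb_deck_def)
  show "p2 (moeb (mat_mult M T) b) = p2 (moeb (mat_mult M T) 0)"
    using Y moeb_in_disc[OF M a] moeb_mult[OF M T b] moeb_mult[OF M T, of 0] Tb T0 cm
    by (simp add: moeb_deck_def)
qed

lemma transversal_double_point_of_mismatch:
  assumes cov1: "covering_space (ball 0 1) p1 D1" and hp1: "p1 holomorphic_on ball 0 1"
    and cov2: "covering_space (ball 0 1) p2 D2" and hp2: "p2 holomorphic_on ball 0 1"
    and X: "moeb_deck p1 X" and Y: "moeb_deck p2 Y" and M: "mat_det M > 0" and a: "cmod a < 1"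
    and ne: "moeb X a \<noteq> a" and cm: "moeb M (moeb X a) = moeb Y (moeb M a)"
    and dmc: "moeb_deriv X a * moeb_deriv M (moeb X a) \<noteq> moeb_deriv Y (moeb M a) * moeb_deriv M a"
  defines "T \<equiv> mat_transl a" and "b \<equiv> moeb (mat_adj (mat_transl a)) (moeb X a)"
  defines "q1 \<equiv> \<lambda>z. p1 (moeb T z)" and "q2 \<equiv> \<lambda>z. p2 (moeb (mat_mult M T) z)"
  shows "deriv q1 0 \<noteq> 0" "deriv q2 0 \<noteq> 0" "deriv q1 0 * deriv q2 b \<noteq> deriv q1 b * deriv q2 0"
proof -
  note dp = double_point_of_mismatch[OF X Y M a ne cm, folded T_def b_def]
  have dX: "mat_det X > 0" and dY: "mat_det Y > 0"
    using X Y by (auto simp: moeb_deck_def)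
  define a' s where "a' = moeb X a" and "s = moeb M a"
  have a': "cmod a' < 1" and s: "cmod s < 1" and s': "cmod (moeb M a') < 1"
    using moeb_in_disc dX M a by (auto simp: a'_def s_def)
  have T0: "moeb T 0 = a"
    by (simp add: T_def moeb_transl_0)
  have dq1: "deriv q1 z = deriv p1 (moeb T z) * moeb_deriv T z" if "cmod z < 1" for z
    unfolding q1_def by (rule deriv_compose_moeb[OF hp1 dp(1) that])
  have dq2: "deriv q2 z = deriv p2 (moeb M (moeb T z)) * (moeb_deriv M (moeb T z) * moeb_deriv T z)"
    if "cmod z < 1" for z
    using deriv_compose_moeb[OF hp2 dp(2) that] moeb_deriv_mult[OF M dp(1) that] moeb_mult[OF M dp(1) that]
    by (simp add: q2_def)
  have np: "deriv p1 w \<noteq> 0" "deriv p2 w \<noteq> 0" if "cmod w < 1" for w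
    using covering_deriv_nonzero[OF cov1 hp1 that] covering_deriv_nonzero[OF cov2 hp2 that] by auto
  have dT: "moeb_deriv T 0 \<noteq> 0" "moeb_deriv T b \<noteq> 0"
    using moeb_deriv_nonzero[OF dp(1)] dp(3) by auto
  show "deriv q1 0 \<noteq> 0" "deriv q2 0 \<noteq> 0"
    using dq1[of 0] dq2[of 0] np[OF a] np[OF s] dT moeb_deriv_nonzero[OF M a] T0 by (simp_all add: s_def)
  have e1: "deriv p1 a = deriv p1 a' * moeb_deriv X a"
    using deck_deriv_eq[OF hp1 X a] by (simp add: a'_def)
  have e2: "deriv p2 s = deriv p2 (moeb M a') * moeb_deriv Y s"
    using deck_deriv_eq[OF hp2 Y s] cm by (simp add: a'_def s_def)
  have nz: "deriv p1 a' * deriv p2 (moeb M a') * moeb_deriv T 0 * moeb_deriv T b \<noteq> 0"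
    using np[OF a'] np[OF s'] dT by simp
  have "deriv q1 0 * deriv q2 b = (deriv p1 a' * deriv p2 (moeb M a') * moeb_deriv T 0 * moeb_deriv T b)
      * (moeb_deriv X a * moeb_deriv M a')"
    using dq1[of 0] dq2[OF dp(3)] T0 dp(5) e1 by (simp add: a'_def algebra_simps)
  moreover have "deriv q1 b * deriv q2 0 = (deriv p1 a' * deriv p2 (moeb M a') * moeb_deriv T 0 * moeb_deriv T b)
      * (moeb_deriv Y s * moeb_deriv M a)"
    using dq1[OF dp(3)] dq2[of 0] T0 dp(5) e2 by (simp add: a'_def s_def algebra_simps)
  ultimately show "deriv q1 0 * deriv q2 b \<noteq> deriv q1 b * deriv q2 0"
    using nz dmc by (simp add: a'_def s_def)
qed

lemma noninjective_coverings_transversal_double_point: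
  assumes cov1: "covering_space (ball 0 1) p1 D1" and hp1: "p1 holomorphic_on ball 0 1"
    and ni1: "\<not> inj_on p1 (ball 0 1)"
    and cov2: "covering_space (ball 0 1) p2 D2" and hp2: "p2 holomorphic_on ball 0 1"
    and ni2: "\<not> inj_on p2 (ball 0 1)"
  obtains T1 T2 b where "mat_det T1 > 0" "mat_det T2 > 0" "cmod b < 1" "b \<noteq> 0"
    "p1 (moeb T1 b) = p1 (moeb T1 0)" "p2 (moeb T2 b) = p2 (moeb T2 0)"
    "deriv (\<lambda>z. p1 (moeb T1 z)) 0 \<noteq> 0" "deriv (\<lambda>z. p2 (moeb T2 z)) 0 \<noteq> 0"
    "deriv (\<lambda>z. p1 (moeb T1 z)) 0 * deriv (\<lambda>z. p2 (moeb T2 z)) b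
      \<noteq> deriv (\<lambda>z. p1 (moeb T1 z)) b * deriv (\<lambda>z. p2 (moeb T2 z)) 0"
proof -
  obtain u1 v1 where "cmod u1 < 1" "cmod v1 < 1" "u1 \<noteq> v1" "p1 u1 = p1 v1"
    using ni1 unfolding inj_on_def by auto
  then obtain P1 where P1: "fixed_point_free P1" "moeb_deck p1 P1"
    using deck_transformation_exists[OF cov1 hp1] by metis
  obtain u2 v2 where "cmod u2 < 1" "cmod v2 < 1" "u2 \<noteq> v2" "p2 u2 = p2 v2"
    using ni2 unfolding inj_on_def by auto
  then obtain P2 where P2: "fixed_point_free P2" "moeb_deck p2 P2"
    using deck_transformation_exists[OF cov2 hp2] by metis
  obtain X Y where XY: "X = P1 \<or> X = mat_mult P1 P1" "Y = P2 \<or> Y = mat_adj P2"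
    "fixed_point_free X" "fixed_point_free Y" "\<not> moeb_conjugate X Y"
    by (rule nonconjugate_variant[OF P1(1) P2(1)])
  have X: "moeb_deck p1 X"
    using XY(1) moeb_deck_mult_self[OF P1(2)] P1(2) by blast
  have Y: "moeb_deck p2 Y"
    using XY(2) moeb_deck_adj[OF P2(2)] P2(2) by blast
  obtain M a where Ma: "mat_det M > 0" "cmod a < 1" "moeb X a \<noteq> a"
    "moeb M (moeb X a) = moeb Y (moeb M a)"
    "moeb_deriv X a * moeb_deriv M (moeb X a) \<noteq> moeb_deriv Y (moeb M a) * moeb_deriv M a"
    by (rule nonconjugate_first_order_mismatch[OF XY(3-5)])
  note dp = double_point_of_mismatch[OF X Y Ma(1-4)]
  from transversal_double_point_of_mismatch[OF cov1 hp1 cov2 hp2 X Y Ma] show ?thesis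
    by (rule that[OF dp(1-4,6,7)])
qed

section \<open>Kobayashi and Hahn pseudometrics\<close>

lemma kobayashi_le_1:
  assumes "hol_disc_map D f"
  shows "kobayashi D (f 0) (deriv0 f) \<le> 1"
proof -
  let ?S = "{cmod \<alpha> |\<alpha>. \<exists>g. hol_disc_map D g \<and> g 0 = f 0 \<and> cscale \<alpha> (deriv0 g) = deriv0 f}"
  have "cscale 1 (deriv0 f) = deriv0 f"
    by (simp add: cscale_def)
  then have "cmod 1 \<in> ?S"
    using assms by blast
  moreover have "bdd_below ?S"
    by (rule bdd_belowI[of _ 0]) auto
  ultimately have "Inf ?S \<le> cmod 1"
    by (rule cInf_lower)
  then show ?thesis
    by (simp add: kobayashi_def)
qed

lemma hahn_ge:
  assumes "\<exists>\<alpha> f. hol_disc_map D f \<and> inj_on f unit_disc \<and> f 0 = z \<and> cscale \<alpha> (deriv0 f) = X"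
    and "\<And>\<alpha> f. hol_disc_map D f \<Longrightarrow> inj_on f unit_disc \<Longrightarrow> f 0 = z \<Longrightarrow> cscale \<alpha> (deriv0 f) = X \<Longrightarrow> m \<le> cmod \<alpha>"
  shows "m \<le> hahn D z X"
  unfolding hahn_def by (rule cInf_greatest) (use assms in auto)

lemma affine_disc_in_ball:
  assumes "cmod \<zeta> < 1" "\<epsilon> \<ge> 0" "\<epsilon> * cmod (fst X) + \<epsilon> * cmod (snd X) < r"
  shows "(fst z + of_real \<epsilon> * \<zeta> * fst X, snd z + of_real \<epsilon> * \<zeta> * snd X) \<in> ball z r"
proof -
  have small: "cmod (of_real \<epsilon> * \<zeta> * w) \<le> \<epsilon> * cmod w" for w
  proof -
    have "cmod \<zeta> * cmod w \<le> cmod w"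
      using assms(1) by (simp add: mult_left_le_one_le)
    then show ?thesis
      using assms(2) by (simp add: norm_mult mult.assoc mult_left_mono)
  qed
  have "(fst z + of_real \<epsilon> * \<zeta> * fst X, snd z + of_real \<epsilon> * \<zeta> * snd X) - z
      = (of_real \<epsilon> * \<zeta> * fst X, of_real \<epsilon> * \<zeta> * snd X)"
    by (simp add: prod_eq_iff)
  then have "dist z (fst z + of_real \<epsilon> * \<zeta> * fst X, snd z + of_real \<epsilon> * \<zeta> * snd X)
      = norm (of_real \<epsilon> * \<zeta> * fst X, of_real \<epsilon> * \<zeta> * snd X)"
    by (metis dist_commute dist_norm)
  also have "\<dots> \<le> cmod (of_real \<epsilon> * \<zeta> * fst X) + cmod (of_real \<epsilon> * \<zeta> * snd X)"
    by (rule norm_Pair_le)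
  also have "\<dots> < r"
    using small[of "fst X"] small[of "snd X"] assms(3) by linarith
  finally show ?thesis
    by simp
qed

lemma injective_affine_disc:
  assumes D: "open D" and z: "z \<in> D" and X: "X \<noteq> 0"
  shows "\<exists>\<alpha> f. hol_disc_map D f \<and> inj_on f unit_disc \<and> f 0 = z \<and> cscale \<alpha> (deriv0 f) = X"
proof -
  obtain r where r: "r > 0" "ball z r \<subseteq> D"
    using D z open_contains_ball by blast
  define \<epsilon> where "\<epsilon> = r / (cmod (fst X) + cmod (snd X) + 1)"
  have "cmod (fst X) + cmod (snd X) + 1 > 0"
    by (simp add: add_nonneg_pos)
  then have \<epsilon>: "\<epsilon> > 0" "\<epsilon> * (cmod (fst X) + cmod (snd X) + 1) = r"
    using r by (simp_all add: \<epsilon>_def)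
  then have \<epsilon>r: "\<epsilon> * cmod (fst X) + \<epsilon> * cmod (snd X) < r"
    by (simp add: distrib_left)
  define f where "f \<zeta> = (fst z + of_real \<epsilon> * \<zeta> * fst X, snd z + of_real \<epsilon> * \<zeta> * snd X)" for \<zeta>
  have "f \<zeta> \<in> ball z r" if "cmod \<zeta> < 1" for \<zeta>
    using affine_disc_in_ball[OF that _ \<epsilon>r] \<epsilon>(1) by (simp add: f_def)
  then have "f \<zeta> \<in> D" if "cmod \<zeta> < 1" for \<zeta>
    using r(2) that by blast
  then have "hol_disc_map D f"
    by (auto simp: hol_disc_map_def unit_disc_def f_def intro!: holomorphic_intros)
  moreover have "inj_on f unit_disc"
  proof (rule inj_onI)
    fix \<zeta> \<zeta>'
    assume "f \<zeta> = f \<zeta>'"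
    then have "of_real \<epsilon> * (\<zeta> - \<zeta>') * fst X = 0" "of_real \<epsilon> * (\<zeta> - \<zeta>') * snd X = 0"
      by (simp_all add: f_def algebra_simps)
    then show "\<zeta> = \<zeta>'"
      using \<epsilon>(1) X by (auto simp: prod_eq_iff)
  qed
  moreover have "deriv (\<lambda>\<zeta>. c + of_real \<epsilon> * \<zeta> * w) 0 = of_real \<epsilon> * w" for c w :: complex
    by (rule DERIV_imp_deriv) (auto intro!: derivative_eq_intros)
  then have "deriv0 f = (of_real \<epsilon> * fst X, of_real \<epsilon> * snd X)"
    by (simp add: deriv0_def f_def)
  then have "cscale (1 / of_real \<epsilon>) (deriv0 f) = X"
    using \<epsilon>(1) by (simp add: cscale_def)
  moreover have "f 0 = z"
    by (simp add: f_def)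
  ultimately show ?thesis
    by blast
qed

lemma holomorphic_factor_through_covering:
  assumes cov: "covering_space (ball 0 1) p D" and hp: "p holomorphic_on ball 0 1" and T: "mat_det T > 0"
    and hf: "f holomorphic_on ball 0 1" and fim: "f \<in> ball 0 1 \<rightarrow> D" and f0: "f 0 = p (moeb T 0)"
  obtains g where "g holomorphic_on ball 0 1" "\<And>z. cmod z < 1 \<Longrightarrow> cmod (g z) < 1" "g 0 = 0"
    "\<And>z. cmod z < 1 \<Longrightarrow> f z = p (moeb T (g z))"
proof -
  have T': "mat_det (mat_adj T) > 0"
    using T by simp
  obtain G where G: "G holomorphic_on ball 0 1" "\<And>z. cmod z < 1 \<Longrightarrow> cmod (G z) < 1" "G 0 = moeb T 0"
      "\<And>z. cmod z < 1 \<Longrightarrow> p (G z) = f z"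
    using holomorphic_lift_disc_covering[OF cov hp hf fim _ f0] moeb_in_disc[OF T] by auto
  show ?thesis
  proof (rule that[of "\<lambda>z. moeb (mat_adj T) (G z)"])
    show "(\<lambda>z. moeb (mat_adj T) (G z)) holomorphic_on ball 0 1"
      by (rule holomorphic_on_compose_disc[OF holomorphic_on_moeb[OF T'] G(1,2)])
    show "cmod (moeb (mat_adj T) (G z)) < 1" if "cmod z < 1" for z
      using moeb_in_disc[OF T' G(2)[OF that]] .
    show "moeb (mat_adj T) (G 0) = 0"
      using moeb_adj_moeb[OF T, of 0] G(3) by simp
    show "f z = p (moeb T (moeb (mat_adj T) (G z)))" if "cmod z < 1" for z
      using G(4)[OF that] moeb_moeb_adj[OF T G(2)[OF that]] by simp
  qed
qed

text \<open>Lifting an injective disc through the coverings writes it as \<open>(q1 \<circ> g1, q2 \<circ> g2)\<close> with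
  self-maps \<open>g\<^sub>j\<close> of the disc fixing 0; they have the common derivative \<open>1 / \<alpha>\<close> at 0, so
  \<open>double_point_persists\<close> forces \<open>|1 / \<alpha>| \<le> 1 - \<theta>\<close>.\<close>

lemma injective_disc_scale_bound:
  assumes cov1: "covering_space (ball 0 1) p1 D1" and hp1: "p1 holomorphic_on ball 0 1"
    and cov2: "covering_space (ball 0 1) p2 D2" and hp2: "p2 holomorphic_on ball 0 1"
    and T1: "mat_det T1 > 0" and T2: "mat_det T2 > 0"
    and q1: "q1 = (\<lambda>z. p1 (moeb T1 z))" and q2: "q2 = (\<lambda>z. p2 (moeb T2 z))"
    and dq: "deriv q1 0 \<noteq> 0" "deriv q2 0 \<noteq> 0" and \<theta>: "\<theta> < 1"
    and NI: "\<And>g1 g2. g1 holomorphic_on ball 0 1 \<Longrightarrow> (\<And>z. cmod z < 1 \<Longrightarrow> cmod (g1 z) < 1) \<Longrightarrow> g1 0 = 0 \<Longrightarrow>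
      g2 holomorphic_on ball 0 1 \<Longrightarrow> (\<And>z. cmod z < 1 \<Longrightarrow> cmod (g2 z) < 1) \<Longrightarrow> g2 0 = 0 \<Longrightarrow>
      deriv g1 0 = deriv g2 0 \<Longrightarrow> 1 - \<theta> < cmod (deriv g1 0) \<Longrightarrow>
      \<not> inj_on (\<lambda>z. (q1 (g1 z), q2 (g2 z))) (ball 0 1)"
    and f: "hol_disc_map (D1 \<times> D2) f" "inj_on f unit_disc" "f 0 = (q1 0, q2 0)"
      "cscale \<alpha> (deriv0 f) = (deriv q1 0, deriv q2 0)"
  shows "1 / (1 - \<theta>) \<le> cmod \<alpha>"
proof -
  have hq1: "q1 holomorphic_on ball 0 1" and hq2: "q2 holomorphic_on ball 0 1"
    unfolding q1 q2 using holomorphic_on_compose_disc[OF _ holomorphic_on_moeb moeb_in_disc] T1 T2 hp1 hp2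
    by blast+
  have f1: "(\<lambda>z. fst (f z)) holomorphic_on ball 0 1" "(\<lambda>z. fst (f z)) \<in> ball 0 1 \<rightarrow> D1"
    and f2: "(\<lambda>z. snd (f z)) holomorphic_on ball 0 1" "(\<lambda>z. snd (f z)) \<in> ball 0 1 \<rightarrow> D2"
    using f(1) by (auto simp: hol_disc_map_def unit_disc_def mem_Times_iff)
  obtain g1 where g1: "g1 holomorphic_on ball 0 1" "\<And>z. cmod z < 1 \<Longrightarrow> cmod (g1 z) < 1" "g1 0 = 0"
      "\<And>z. cmod z < 1 \<Longrightarrow> fst (f z) = q1 (g1 z)"
    using holomorphic_factor_through_covering[OF cov1 hp1 T1 f1] f(3) by (auto simp: q1)
  obtain g2 where g2: "g2 holomorphic_on ball 0 1" "\<And>z. cmod z < 1 \<Longrightarrow> cmod (g2 z) < 1" "g2 0 = 0"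
      "\<And>z. cmod z < 1 \<Longrightarrow> snd (f z) = q2 (g2 z)"
    using holomorphic_factor_through_covering[OF cov2 hp2 T2 f2] f(3) by (auto simp: q2)
  have "\<alpha> * (deriv q1 0 * deriv g1 0) = deriv q1 0" "\<alpha> * (deriv q2 0 * deriv g2 0) = deriv q2 0"
    using f(4) deriv_compose_disc[OF hq1 g1(1,2,4), of 0] deriv_compose_disc[OF hq2 g2(1,2,4), of 0] g1(3) g2(3)
    by (simp_all add: cscale_def deriv0_def)
  then have "\<alpha> * deriv g1 0 = 1" "\<alpha> * deriv g2 0 = 1"
    using dq by auto
  then have "\<alpha> \<noteq> 0" "deriv g1 0 = 1 / \<alpha>" "deriv g2 0 = 1 / \<alpha>"
    by (auto simp: eq_divide_eq mult.commute)
  moreover have "inj_on (\<lambda>z. (q1 (g1 z), q2 (g2 z))) (ball 0 1)"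
    using f(2) g1(4) g2(4) by (auto simp: inj_on_def unit_disc_def prod_eq_iff)
  ultimately have "cmod (1 / \<alpha>) \<le> 1 - \<theta>"
    using NI[OF g1(1-3) g2(1-3)] by fastforce
  then show ?thesis
    using \<theta> \<open>\<alpha> \<noteq> 0\<close> by (simp add: norm_divide field_simps)
qed

lemma kobayashi_less_hahn:
  assumes cov1: "covering_space (ball 0 1) p1 D1" and hp1: "p1 holomorphic_on ball 0 1"
    and cov2: "covering_space (ball 0 1) p2 D2" and hp2: "p2 holomorphic_on ball 0 1"
    and D: "open D1" "open D2" and T1: "mat_det T1 > 0" and T2: "mat_det T2 > 0"
    and q1: "q1 = (\<lambda>z. p1 (moeb T1 z))" and q2: "q2 = (\<lambda>z. p2 (moeb T2 z))"
    and b: "cmod b < 1" "b \<noteq> 0" and dp: "q1 b = q1 0" "q2 b = q2 0"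
    and dq: "deriv q1 0 \<noteq> 0" "deriv q2 0 \<noteq> 0"
    and tr: "deriv q1 0 * deriv q2 b \<noteq> deriv q1 b * deriv q2 0"
  shows "kobayashi (D1 \<times> D2) (q1 0, q2 0) (deriv q1 0, deriv q2 0)
    < hahn (D1 \<times> D2) (q1 0, q2 0) (deriv q1 0, deriv q2 0)"
proof -
  have qD: "q1 z \<in> D1" "q2 z \<in> D2" if "cmod z < 1" for z
    using covering_space_imp_surjective[OF cov1] covering_space_imp_surjective[OF cov2]
      moeb_in_disc[OF T1 that] moeb_in_disc[OF T2 that] by (auto simp: q1 q2)
  have hq: "q1 holomorphic_on ball 0 1" "q2 holomorphic_on ball 0 1"
    unfolding q1 q2 using holomorphic_on_compose_disc[OF _ holomorphic_on_moeb moeb_in_disc] T1 T2 hp1 hp2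
    by blast+
  then have "hol_disc_map (D1 \<times> D2) (\<lambda>z. (q1 z, q2 z))"
    using qD by (auto simp: hol_disc_map_def unit_disc_def)
  then have K: "kobayashi (D1 \<times> D2) (q1 0, q2 0) (deriv q1 0, deriv q2 0) \<le> 1"
    using kobayashi_le_1 by (force simp: deriv0_def)
  show ?thesis
  proof (rule double_point_persists[OF hq b dp tr])
    fix \<theta> :: real
    assume \<theta>: "0 < \<theta>" "\<theta> < 1"
      and NI: "\<And>g1 g2. g1 holomorphic_on ball 0 1 \<Longrightarrow> (\<And>z. cmod z < 1 \<Longrightarrow> cmod (g1 z) < 1) \<Longrightarrow> g1 0 = 0 \<Longrightarrow>
        g2 holomorphic_on ball 0 1 \<Longrightarrow> (\<And>z. cmod z < 1 \<Longrightarrow> cmod (g2 z) < 1) \<Longrightarrow> g2 0 = 0 \<Longrightarrow>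
        deriv g1 0 = deriv g2 0 \<Longrightarrow> 1 - \<theta> < cmod (deriv g1 0) \<Longrightarrow>
        \<not> inj_on (\<lambda>z. (q1 (g1 z), q2 (g2 z))) (ball 0 1)"
    have "1 < 1 / (1 - \<theta>)"
      using \<theta> by (simp add: field_simps)
    also have "1 / (1 - \<theta>) \<le> hahn (D1 \<times> D2) (q1 0, q2 0) (deriv q1 0, deriv q2 0)"
    proof (rule hahn_ge[OF injective_affine_disc])
      show "open (D1 \<times> D2)"
        using D by (rule open_Times)
      show "(q1 0, q2 0) \<in> D1 \<times> D2"
        using qD[of 0] by simp
      show "(deriv q1 0, deriv q2 0) \<noteq> 0"
        using dq by (simp add: zero_prod_def)
    qed (rule injective_disc_scale_bound[OF cov1 hp1 cov2 hp2 T1 T2 q1 q2 dq \<theta>(2) NI])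
    finally show ?thesis
      using K by linarith
  qed
qed

theorem proposition4:
  fixes D1 D2 :: "complex set" and p1 p2 :: "complex \<Rightarrow> complex"
  assumes "open D1" "connected D1" "open D2" "connected D2"
    and "p1 holomorphic_on unit_disc" "covering_space unit_disc p1 D1" "\<not> inj_on p1 unit_disc"
    and "p2 holomorphic_on unit_disc" "covering_space unit_disc p2 D2" "\<not> inj_on p2 unit_disc"
  shows "\<exists>z \<in> D1 \<times> D2. \<exists>X. hahn (D1 \<times> D2) z X \<noteq> kobayashi (D1 \<times> D2) z X"
proof -
  note cov = assms(5-10)[unfolded unit_disc_def]
  obtain T1 T2 b where T: "mat_det T1 > 0" "mat_det T2 > 0" and b: "cmod b < 1" "b \<noteq> 0"
    and dp: "p1 (moeb T1 b) = p1 (moeb T1 0)" "p2 (moeb T2 b) = p2 (moeb T2 0)"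
    and dq: "deriv (\<lambda>z. p1 (moeb T1 z)) 0 \<noteq> 0" "deriv (\<lambda>z. p2 (moeb T2 z)) 0 \<noteq> 0"
    and tr: "deriv (\<lambda>z. p1 (moeb T1 z)) 0 * deriv (\<lambda>z. p2 (moeb T2 z)) b
      \<noteq> deriv (\<lambda>z. p1 (moeb T1 z)) b * deriv (\<lambda>z. p2 (moeb T2 z)) 0"
    by (rule noninjective_coverings_transversal_double_point[OF cov(2,1,3) cov(5,4,6)])
  define z0 X where "z0 = (p1 (moeb T1 0), p2 (moeb T2 0))"
    and "X = (deriv (\<lambda>z. p1 (moeb T1 z)) 0, deriv (\<lambda>z. p2 (moeb T2 z)) 0)"
  have "kobayashi (D1 \<times> D2) z0 X < hahn (D1 \<times> D2) z0 X"
    using kobayashi_less_hahn[OF cov(2,1) cov(5,4) assms(1,3) T refl refl b _ _ dq tr] dp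
    by (simp add: z0_def X_def)
  then have "hahn (D1 \<times> D2) z0 X \<noteq> kobayashi (D1 \<times> D2) z0 X"
    by auto
  moreover have "z0 \<in> D1 \<times> D2"
    using covering_space_imp_surjective[OF cov(2)] covering_space_imp_surjective[OF cov(5)]
      moeb_in_disc[OF T(1), of 0] moeb_in_disc[OF T(2), of 0] by (auto simp: z0_def)
  ultimately show ?thesis
    by blast
qed

end
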